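(* For each maximal cone $\sigma$ of $\Sigma$ there exists $c_\sigma\in\mathcal C_\sigma^\vee$ such that the series $\sum_{l\in\mathbb L\cap\mathcal C_\sigma}\prod_{j=1}^n\frac{z_j^{l_j+\lambda_j}}{\Gamma(l_j+\lambda_j+1)}$ is absolutely convergent for $(z,\lambda)\in U_\sigma\times\mathbb C^n$ and defines an analytic function on $U_\sigma\times\mathbb C^n$, where $U_\sigma=\{z\in\mathbb C^n:(-\log|z_1|,\dots,-\log|z_n|)\in\mathcal C_\sigma^\vee+c_\sigma,\ (\arg z_1,\dots,\arg z_n)\in(-\pi,\pi)^n\}$ and $z_j^{\lambda_j}=e^{\lambda_j(\log|z_j|+i\arg z_j)}$.
   Context: $N\cong\mathbb Z^d$ lattice, $\mathcal A=\{v_1,\dots,v_n\}\subset N$ generating $N$ with a homomorphism $\mathrm h:N\to\mathbb Z$, $\mathrm h(v_j)=1$ for all $j$; $\mathbb L=\{l\in\mathbb Z^n:\sum l_jv_j=0\}$; $\Sigma$ the simplicial fan supported on $\mathbb R_{\ge0}\mathrm{Conv}(\mathcal A)$ from a regular triangulation of $\mathrm{Conv}(\mathcal A)$ with vertices in $\mathcal A$. For a maximal cone $\sigma$, $\mathcal C_\sigma=\{x\in\mathbb L\otimes\mathbb R\subset\mathbb R^n:x_j\ge0$ whenever $\mathbb R_{\ge0}v_j$ is not a ray of $\sigma\}$ and $\mathcal C_\sigma^\vee=\{u\in\mathbb R^n:\langle u,x\rangle\ge0\ \forall x\in\mathcal C_\sigma\}$. *)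

theory Defs
  imports "HOL-Analysis.Analysis"
begin

(* N = Z^d is modelled as  'd \<Rightarrow> int  with 'd a finite index type (d = CARD('d)).
   The configuration A = {v_1,...,v_n} is a family  v :: 'n \<Rightarrow> ('d \<Rightarrow> int),  'n finite
   (n = CARD('n)). *)

definition generates_lattice :: "('n::finite \<Rightarrow> 'd::finite \<Rightarrow> int) \<Rightarrow> bool" where
  "generates_lattice v \<longleftrightarrow>
     (\<forall>x :: 'd \<Rightarrow> int. \<exists>c :: 'n \<Rightarrow> int. x = (\<lambda>i. \<Sum>j\<in>UNIV. c j * v j i))"

definition has_height_one :: "('n::finite \<Rightarrow> 'd::finite \<Rightarrow> int) \<Rightarrow> bool" where
  "has_height_one v \<longleftrightarrow> (\<exists>h :: 'd \<Rightarrow> int. \<forall>j. (\<Sum>i\<in>UNIV. h i * v j i) = 1)"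

definition Lat :: "('n::finite \<Rightarrow> 'd::finite \<Rightarrow> int) \<Rightarrow> ('n \<Rightarrow> int) set" where
  "Lat v = {l. \<forall>i. (\<Sum>j\<in>UNIV. l j * v j i) = 0}"

(* L \<otimes> R, viewed inside R^n: the real span of L *)
definition LatR :: "('n::finite \<Rightarrow> 'd::finite \<Rightarrow> int) \<Rightarrow> ('n \<Rightarrow> real) set" where
  "LatR v = {x. \<exists>F c. finite F \<and> F \<subseteq> Lat v \<and>
                    x = (\<lambda>j. \<Sum>l\<in>F. c l * real_of_int (l j))}"

(* Regular subdivision of Conv(A) induced by a height function \<omega> : A \<rightarrow> R.
   Since h(v_j) = 1, affine functions on the hyperplane h = 1 are restrictions of linear
   functionals \<psi> on R^d.  The cells of the subdivision are the index sets
   {j. \<psi>(v_j) = \<omega>_j} for \<psi> with \<psi>(v_j) \<le> \<omega>_j for all j (lower faces of the lifted polytope)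
   that are nonempty. *)
definition lower_functional :: "('n::finite \<Rightarrow> 'd::finite \<Rightarrow> int) \<Rightarrow> ('n \<Rightarrow> real) \<Rightarrow> ('d \<Rightarrow> real) \<Rightarrow> bool" where
  "lower_functional v \<omega> \<psi> \<longleftrightarrow> (\<forall>j. (\<Sum>i\<in>UNIV. \<psi> i * real_of_int (v j i)) \<le> \<omega> j)"

definition cell :: "('n::finite \<Rightarrow> 'd::finite \<Rightarrow> int) \<Rightarrow> ('n \<Rightarrow> real) \<Rightarrow> 'n set \<Rightarrow> bool" where
  "cell v \<omega> I \<longleftrightarrow> I \<noteq> {} \<and> (\<exists>\<psi>. lower_functional v \<omega> \<psi> \<and>
       I = {j. (\<Sum>i\<in>UNIV. \<psi> i * real_of_int (v j i)) = \<omega> j})"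

definition lin_indep_on :: "('n::finite \<Rightarrow> 'd::finite \<Rightarrow> int) \<Rightarrow> 'n set \<Rightarrow> bool" where
  "lin_indep_on v J \<longleftrightarrow> (\<forall>c :: 'n \<Rightarrow> real. (\<forall>j. j \<notin> J \<longrightarrow> c j = 0) \<and>
       (\<forall>i. (\<Sum>j\<in>UNIV. c j * real_of_int (v j i)) = 0) \<longrightarrow> (\<forall>j. c j = 0))"

(* \<omega> induces a (regular) triangulation with vertices in A: every cell is a simplex,
   i.e. its points are affinely (equivalently, since h = 1 on A, linearly) independent *)
definition regular_triangulation :: "('n::finite \<Rightarrow> 'd::finite \<Rightarrow> int) \<Rightarrow> ('n \<Rightarrow> real) \<Rightarrow> bool" where
  "regular_triangulation v \<omega> \<longleftrightarrow> (\<forall>I. cell v \<omega> I \<longrightarrow> lin_indep_on v I)"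

(* maximal cones of the fan \<Sigma> = cones R_{\<ge>0} Conv{v_j : j \<in> I} over maximal cells I;
   the rays of such a cone are exactly R_{\<ge>0} v_j, j \<in> I *)
definition maximal_cell :: "('n::finite \<Rightarrow> 'd::finite \<Rightarrow> int) \<Rightarrow> ('n \<Rightarrow> real) \<Rightarrow> 'n set \<Rightarrow> bool" where
  "maximal_cell v \<omega> I \<longleftrightarrow> cell v \<omega> I \<and> (\<forall>J. cell v \<omega> J \<and> I \<subseteq> J \<longrightarrow> J = I)"

definition Ccone :: "('n::finite \<Rightarrow> 'd::finite \<Rightarrow> int) \<Rightarrow> 'n set \<Rightarrow> ('n \<Rightarrow> real) set" where
  "Ccone v I = {x \<in> LatR v. \<forall>j. j \<notin> I \<longrightarrow> x j \<ge> 0}"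

definition dual_cone :: "('n::finite \<Rightarrow> real) set \<Rightarrow> ('n \<Rightarrow> real) set" where
  "dual_cone C = {u. \<forall>x\<in>C. (\<Sum>j\<in>UNIV. u j * x j) \<ge> 0}"

definition zpow :: "complex \<Rightarrow> complex \<Rightarrow> complex" where
  "zpow z \<mu> = exp (\<mu> * (complex_of_real (ln (cmod z)) + \<i> * complex_of_real (Arg z)))"

definition Uset :: "('n::finite \<Rightarrow> 'd::finite \<Rightarrow> int) \<Rightarrow> 'n set \<Rightarrow> ('n \<Rightarrow> real) \<Rightarrow> ('n \<Rightarrow> complex) set" where
  "Uset v I c = {z. (\<forall>j. z j \<noteq> 0) \<and>
      (\<exists>u\<in>dual_cone (Ccone v I). (\<lambda>j. - ln (cmod (z j))) = (\<lambda>j. u j + c j)) \<and>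
      (\<forall>j. - pi < Arg (z j) \<and> Arg (z j) < pi)}"

definition series_term :: "('n::finite \<Rightarrow> complex) \<Rightarrow> ('n \<Rightarrow> complex) \<Rightarrow> ('n \<Rightarrow> int) \<Rightarrow> complex" where
  "series_term z lam l = (\<Prod>j\<in>UNIV. zpow (z j) (of_int (l j) + lam j) / Gamma (of_int (l j) + lam j + 1))"

(* Analyticity of a function of (z, \<lambda>) \<in> C^n \<times> C^n on a set S: around every point of S
   it is given on a polydisc by an (absolutely) convergent power series
   (as for the library's analytic_on, analyticity on S means on a neighbourhood of each point) *)
definition analytic2_on :: "(('n::finite \<Rightarrow> complex) \<times> ('n \<Rightarrow> complex)) set \<Rightarrow>
                            (('n \<Rightarrow> complex) \<Rightarrow> ('n \<Rightarrow> complex) \<Rightarrow> complex) \<Rightarrow> bool" where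
  "analytic2_on S f \<longleftrightarrow> (\<forall>(z0, lam0)\<in>S. \<exists>r>0. \<exists>a :: ('n \<Rightarrow> nat) \<Rightarrow> ('n \<Rightarrow> nat) \<Rightarrow> complex.
      \<forall>z lam. (\<forall>j. cmod (z j - z0 j) < r \<and> cmod (lam j - lam0 j) < r) \<longrightarrow>
        ((\<lambda>(\<alpha>, \<beta>). a \<alpha> \<beta> * (\<Prod>j\<in>UNIV. (z j - z0 j) ^ \<alpha> j) * (\<Prod>j\<in>UNIV. (lam j - lam0 j) ^ \<beta> j))
           has_sum f z lam) UNIV)"

end

(* As the v_j with j in I are linearly independent, a relation l in the
   lattice L is controlled by its coordinates outside I: sum_j |l_j| <= M sum_{j not in I} |l_j|;
   and sum_j l_j = 0 because h(v_j) = 1.  Take c_j = 0 on I and c_j = K outside I, with K large.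

   Near a point (z0, lam0) with z0 in U_sigma, the j-th factor z_j^(m + lam_j) / Gamma(m + lam_j + 1)
   is a power series in (z - z0, lam - lam0) whose majorant on a small polydisc is at most
   C |z0_j|^m e^|m| 2^|m| F(m), where F(m) = 1/m! for m >= 0 and |m|! for m < 0 is the growth of 1/Gamma.
   Since sum_j l_j = 0, the product of the F(l_j) is at most 2^(n sum_j |l_j|), and for l in L with
   l_j >= 0 outside I the choice of c bounds the product of the majorants by C' exp(-sum_{j not in I} l_j).
   This is summable over L intersected with C_sigma, since l is determined by its coordinates outside I.
   A summable family of majorants gives absolute convergence and, after regrouping by exponents,
   a convergent power series expansion of the sum around every point. *)

theory Submission
  imports Defs "HOL-Complex_Analysis.Complex_Analysis"
begin

section \<open>Power series majorants on polydiscs\<close>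

type_synonym 'n exponent = "('n \<Rightarrow> nat) \<times> ('n \<Rightarrow> nat)"
type_synonym 'n bivariate = "('n \<Rightarrow> complex) \<Rightarrow> ('n \<Rightarrow> complex) \<Rightarrow> complex"

definition monomial :: "'n::finite exponent \<Rightarrow> ('n \<Rightarrow> complex) \<Rightarrow> ('n \<Rightarrow> complex) \<Rightarrow> complex" where
  "monomial e w u = (\<Prod>j\<in>UNIV. w j ^ fst e j) * (\<Prod>j\<in>UNIV. u j ^ snd e j)"

definition total_degree :: "'n::finite exponent \<Rightarrow> nat" where
  "total_degree e = (\<Sum>j\<in>UNIV. fst e j) + (\<Sum>j\<in>UNIV. snd e j)"

definition in_polydisc :: "real \<Rightarrow> ('n::finite \<Rightarrow> complex) \<Rightarrow> ('n \<Rightarrow> complex) \<Rightarrow> bool" where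
  "in_polydisc r w u \<longleftrightarrow> (\<forall>j. norm (w j) < r \<and> norm (u j) < r)"

(* Families over arbitrary countable index sets
   (coded into nat) are closed under sums and products without any rearrangement argument. *)
definition has_series_majorant :: "real \<Rightarrow> 'n::finite bivariate \<Rightarrow> real \<Rightarrow> bool" where
  "has_series_majorant r F M \<longleftrightarrow> (\<exists>(K::nat set) c e m.
      ((\<lambda>k. norm (c k) * r ^ total_degree (e k)) has_sum m) K \<and> m \<le> M \<and>
      (\<forall>w u. in_polydisc r w u \<longrightarrow> ((\<lambda>k. c k * monomial (e k) w u) has_sum F w u) K))"

lemma monomial_mult:
  "monomial e w u * monomial e' w u = monomial ((\<lambda>j. fst e j + fst e' j), (\<lambda>j. snd e j + snd e' j)) w u"
  by (simp add: monomial_def power_add prod.distrib mult_ac)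

lemma total_degree_add:
  "total_degree ((\<lambda>j. fst e j + fst e' j), (\<lambda>j. snd e j + snd e' j)) = total_degree e + total_degree e'"
  by (simp add: total_degree_def sum.distrib)

lemma norm_monomial_le:
  assumes "in_polydisc r w u"
  shows "norm (monomial e w u) \<le> r ^ total_degree e"
proof -
  have "0 \<le> r"
    using assms unfolding in_polydisc_def by (meson norm_ge_zero order.strict_trans1 less_imp_le)
  have "norm (monomial e w u) = (\<Prod>j\<in>UNIV. norm (w j) ^ fst e j) * (\<Prod>j\<in>UNIV. norm (u j) ^ snd e j)"
    by (simp add: monomial_def norm_mult norm_power flip: prod_norm)
  also have "\<dots> \<le> (\<Prod>j\<in>UNIV. r ^ fst e j) * (\<Prod>j\<in>UNIV. r ^ snd e j)"
    using assms unfolding in_polydisc_def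
    by (intro mult_mono prod_mono conjI power_mono prod_nonneg zero_le_power \<open>0 \<le> r\<close>) (auto intro: less_imp_le)
  also have "\<dots> = r ^ total_degree e"
    by (simp add: total_degree_def power_add power_sum)
  finally show ?thesis .
qed

lemma has_series_majorantI:
  fixes K :: "'k::countable set" and F :: "'n::finite bivariate"
  assumes "((\<lambda>k. norm (c k) * r ^ total_degree (e k)) has_sum m) K" "m \<le> M"
    and "\<And>w u. in_polydisc r w u \<Longrightarrow> ((\<lambda>k. c k * monomial (e k) w u) has_sum F w u) K"
  shows "has_series_majorant r F M"
proof -
  have inj: "inj_on to_nat K"
    by (simp add: inj_on_def)
  have "((\<lambda>k. norm ((c \<circ> from_nat) k) * r ^ total_degree ((e \<circ> from_nat) k)) has_sum m) (to_nat ` K)"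
    using assms(1) by (simp add: has_sum_reindex[OF inj] o_def)
  moreover have "((\<lambda>k. (c \<circ> from_nat) k * monomial ((e \<circ> from_nat) k) w u) has_sum F w u) (to_nat ` K)"
    if "in_polydisc r w u" for w u
    using assms(3)[OF that] by (simp add: has_sum_reindex[OF inj] o_def)
  ultimately show ?thesis
    using assms(2) unfolding has_series_majorant_def
    by (intro exI[of _ "to_nat ` K"] exI[of _ "c \<circ> from_nat"] exI[of _ "e \<circ> from_nat"] exI[of _ m]) simp
qed

lemma has_series_majorantE:
  fixes F :: "'n::finite bivariate"
  assumes "has_series_majorant r F M"
  obtains c :: "nat \<Rightarrow> complex" and e :: "nat \<Rightarrow> 'n exponent" and K :: "nat set" and m :: real
  where "((\<lambda>k. norm (c k) * r ^ total_degree (e k)) has_sum m) K" "m \<le> M"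
    and "\<And>w u. in_polydisc r w u \<Longrightarrow> ((\<lambda>k. c k * monomial (e k) w u) has_sum F w u) K"
  using assms unfolding has_series_majorant_def by blast

lemma has_series_majorant_nonneg:
  fixes F :: "'n::finite bivariate"
  assumes "has_series_majorant r F M" "0 \<le> r"
  shows "0 \<le> M"
proof -
  obtain c :: "nat \<Rightarrow> complex" and e :: "nat \<Rightarrow> 'n exponent" and K :: "nat set" and m :: real
    where maj: "((\<lambda>k. norm (c k) * r ^ total_degree (e k)) has_sum m) K" "m \<le> M"
      and "\<And>w u. in_polydisc r w u \<Longrightarrow> ((\<lambda>k. c k * monomial (e k) w u) has_sum F w u) K"
    by (rule has_series_majorantE[OF assms(1)]) blast
  have "0 \<le> m"
    using maj(1) by (rule has_sum_nonneg) (simp add: assms(2))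
  with maj(2) show ?thesis
    by simp
qed

lemma norm_le_has_series_majorant:
  fixes F :: "'n::finite bivariate"
  assumes "has_series_majorant r F M" "in_polydisc r w u"
  shows "norm (F w u) \<le> M"
proof -
  obtain c :: "nat \<Rightarrow> complex" and e :: "nat \<Rightarrow> 'n exponent" and K :: "nat set" and m :: real
    where maj: "((\<lambda>k. norm (c k) * r ^ total_degree (e k)) has_sum m) K" "m \<le> M"
      and rep: "\<And>w u. in_polydisc r w u \<Longrightarrow> ((\<lambda>k. c k * monomial (e k) w u) has_sum F w u) K"
    by (rule has_series_majorantE[OF assms(1)]) blast
  have "norm (F w u) \<le> m"
    using rep[OF assms(2)] maj(1)
    by (rule norm_infsum_le) (auto simp: norm_mult intro!: mult_left_mono norm_monomial_le assms(2))
  with maj(2) show ?thesis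
    by simp
qed

lemma has_series_majorant_mono:
  "has_series_majorant r F M \<Longrightarrow> M \<le> M' \<Longrightarrow> has_series_majorant r F M'"
  unfolding has_series_majorant_def by (meson order.trans)

lemma has_series_majorant_cong:
  fixes F G :: "'n::finite bivariate"
  assumes "has_series_majorant r F M" "\<And>w u. in_polydisc r w u \<Longrightarrow> F w u = G w u"
  shows "has_series_majorant r G M"
proof -
  obtain c :: "nat \<Rightarrow> complex" and e :: "nat \<Rightarrow> 'n exponent" and K :: "nat set" and m :: real
    where maj: "((\<lambda>k. norm (c k) * r ^ total_degree (e k)) has_sum m) K" "m \<le> M"
      and rep: "\<And>w u. in_polydisc r w u \<Longrightarrow> ((\<lambda>k. c k * monomial (e k) w u) has_sum F w u) K"
    by (rule has_series_majorantE[OF assms(1)]) blast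
  show ?thesis
    by (rule has_series_majorantI[OF maj]) (metis rep assms(2))
qed

lemma has_series_majorant_const: "has_series_majorant r (\<lambda>w u. a) (norm a)"
  by (rule has_series_majorantI[where K = "{()}" and c = "\<lambda>_. a" and e = "\<lambda>_. (\<lambda>_. 0, \<lambda>_. 0)" and m = "norm a"])
     (simp_all add: has_sum_finite_iff total_degree_def monomial_def)

lemma has_series_majorant_monomial_mult:
  fixes F :: "'n::finite bivariate"
  assumes "has_series_majorant r F M" "0 \<le> r"
  shows "has_series_majorant r (\<lambda>w u. a * monomial e0 w u * F w u) (norm a * r ^ total_degree e0 * M)"
proof -
  obtain c :: "nat \<Rightarrow> complex" and e :: "nat \<Rightarrow> 'n exponent" and K :: "nat set" and m :: real
    where maj: "((\<lambda>k. norm (c k) * r ^ total_degree (e k)) has_sum m) K" "m \<le> M"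
      and rep: "\<And>w u. in_polydisc r w u \<Longrightarrow> ((\<lambda>k. c k * monomial (e k) w u) has_sum F w u) K"
    by (rule has_series_majorantE[OF assms(1)]) blast
  define e' where "e' k = ((\<lambda>j. fst e0 j + fst (e k) j), (\<lambda>j. snd e0 j + snd (e k) j))" for k
  show ?thesis
  proof (rule has_series_majorantI)
    show "((\<lambda>k. norm (a * c k) * r ^ total_degree (e' k)) has_sum (norm a * r ^ total_degree e0 * m)) K"
      using has_sum_cmult_right[OF maj(1), of "norm a * r ^ total_degree e0"]
      by (simp add: e'_def total_degree_add power_add norm_mult mult_ac)
    show "norm a * r ^ total_degree e0 * m \<le> norm a * r ^ total_degree e0 * M"
      using maj(2) assms(2) by (simp add: mult_left_mono)
    show "((\<lambda>k. a * c k * monomial (e' k) w u) has_sum (a * monomial e0 w u * F w u)) K"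
      if "in_polydisc r w u" for w u
    proof -
      have "monomial (e' k) w u = monomial e0 w u * monomial (e k) w u" for k
        by (simp add: e'_def monomial_mult)
      then have "(\<lambda>k. a * c k * monomial (e' k) w u) = (\<lambda>k. a * monomial e0 w u * (c k * monomial (e k) w u))"
        by (simp add: mult_ac)
      then show ?thesis
        using has_sum_cmult_right[OF rep[OF that]] by simp
    qed
  qed
qed

lemma has_series_majorant_choice:
  fixes F :: "'l \<Rightarrow> 'n::finite bivariate"
  assumes "\<And>l. l \<in> L \<Longrightarrow> has_series_majorant r (F l) (M l)"
  obtains c :: "'l \<Rightarrow> nat \<Rightarrow> complex" and e :: "'l \<Rightarrow> nat \<Rightarrow> 'n exponent" and K :: "'l \<Rightarrow> nat set"
    and m :: "'l \<Rightarrow> real"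
  where "\<And>l. l \<in> L \<Longrightarrow> ((\<lambda>k. norm (c l k) * r ^ total_degree (e l k)) has_sum m l) (K l)"
    and "\<And>l. l \<in> L \<Longrightarrow> m l \<le> M l"
    and "\<And>l w u. l \<in> L \<Longrightarrow> in_polydisc r w u \<Longrightarrow>
           ((\<lambda>k. c l k * monomial (e l k) w u) has_sum F l w u) (K l)"
proof -
  define P where "P l c e K m \<longleftrightarrow> ((\<lambda>k. norm (c k) * r ^ total_degree (e k)) has_sum m) K \<and> m \<le> M l \<and>
      (\<forall>w u. in_polydisc r w u \<longrightarrow> ((\<lambda>k. c k * monomial (e k) w u) has_sum F l w u) K)"
    for l and c :: "nat \<Rightarrow> complex" and e :: "nat \<Rightarrow> 'n exponent" and K :: "nat set" and m
  have "\<forall>l\<in>L. \<exists>c e K m. P l c e K m"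
    using assms unfolding has_series_majorant_def P_def by blast
  then obtain c where "\<forall>l\<in>L. \<exists>e K m. P l (c l) e K m"
    by (auto dest: bchoice)
  then obtain e where "\<forall>l\<in>L. \<exists>K m. P l (c l) (e l) K m"
    by (auto dest: bchoice)
  then obtain K where "\<forall>l\<in>L. \<exists>m. P l (c l) (e l) (K l) m"
    by (auto dest: bchoice)
  then obtain m where "\<forall>l\<in>L. P l (c l) (e l) (K l) (m l)"
    by (auto dest: bchoice)
  then show ?thesis
    by (intro that[of c e K m]) (auto simp: P_def)
qed

lemma has_series_majorant_infsum:
  fixes F :: "'l::countable \<Rightarrow> 'n::finite bivariate"
  assumes r: "0 \<le> r" and F: "\<And>l. l \<in> L \<Longrightarrow> has_series_majorant r (F l) (M l)"
    and M: "M summable_on L"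
  shows "has_series_majorant r (\<lambda>w u. \<Sum>\<^sub>\<infinity>l\<in>L. F l w u) (\<Sum>\<^sub>\<infinity>l\<in>L. M l)"
proof (rule has_series_majorant_choice[OF F])
  fix cc :: "'l \<Rightarrow> nat \<Rightarrow> complex" and ee :: "'l \<Rightarrow> nat \<Rightarrow> 'n exponent" and KK :: "'l \<Rightarrow> nat set"
    and mm :: "'l \<Rightarrow> real"
  assume maj: "\<And>l. l \<in> L \<Longrightarrow> ((\<lambda>k. norm (cc l k) * r ^ total_degree (ee l k)) has_sum mm l) (KK l)"
    and mm_le: "\<And>l. l \<in> L \<Longrightarrow> mm l \<le> M l"
    and rep: "\<And>l w u. l \<in> L \<Longrightarrow> in_polydisc r w u \<Longrightarrow>
                ((\<lambda>k. cc l k * monomial (ee l k) w u) has_sum F l w u) (KK l)"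
  define S where "S = Sigma L KK"
  define g where "g p = norm (cc (fst p) (snd p)) * r ^ total_degree (ee (fst p) (snd p))" for p
  have mm_nonneg: "0 \<le> mm l" if "l \<in> L" for l
    using maj[OF that] by (rule has_sum_nonneg) (simp add: r)
  have mm_summable: "mm summable_on L"
    by (rule summable_on_comparison_test[OF M]) (use mm_nonneg mm_le in auto)
  have g_summable: "g summable_on S"
    unfolding S_def using maj mm_summable by (intro summable_on_SigmaI[where g = mm]) (auto simp: g_def r)
  have "(mm has_sum infsum g S) L"
    using has_sum_infsum[OF g_summable] unfolding S_def by (rule has_sum_Sigma') (simp add: g_def maj)
  then have "infsum g S = infsum mm L"
    by (simp add: infsumI)
  also have "\<dots> \<le> (\<Sum>\<^sub>\<infinity>l\<in>L. M l)"
    using mm_summable M mm_le by (rule infsum_mono)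
  finally have "infsum g S \<le> (\<Sum>\<^sub>\<infinity>l\<in>L. M l)" .
  define c where "c p = cc (fst p) (snd p)" for p
  define e where "e p = ee (fst p) (snd p)" for p
  show ?thesis
  proof (rule has_series_majorantI[where c = c and e = e and K = S and m = "infsum g S"])
    show "((\<lambda>p. norm (c p) * r ^ total_degree (e p)) has_sum infsum g S) S"
      using has_sum_infsum[OF g_summable] by (simp add: c_def e_def g_def[abs_def])
    show "infsum g S \<le> (\<Sum>\<^sub>\<infinity>l\<in>L. M l)"
      by fact
    fix w u :: "'n \<Rightarrow> complex"
    assume wu: "in_polydisc r w u"
    define f where "f p = c p * monomial (e p) w u" for p
    have "(\<lambda>p. norm (f p)) summable_on S"
      by (rule summable_on_comparison_test[OF g_summable])
         (auto simp: f_def g_def c_def e_def norm_mult intro!: mult_left_mono norm_monomial_le wu)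
    then have f_has_sum: "(f has_sum infsum f S) S"
      by (rule has_sum_infsum[OF abs_summable_summable])
    then have "((\<lambda>l. F l w u) has_sum infsum f S) L"
      unfolding S_def by (rule has_sum_Sigma') (simp add: f_def c_def e_def rep wu)
    then have "(\<Sum>\<^sub>\<infinity>l\<in>L. F l w u) = infsum f S"
      by (rule infsumI)
    with f_has_sum show "((\<lambda>p. c p * monomial (e p) w u) has_sum (\<Sum>\<^sub>\<infinity>l\<in>L. F l w u)) S"
      unfolding f_def by simp
  qed
qed

lemma has_series_majorant_mult:
  fixes F G :: "'n::finite bivariate"
  assumes F: "has_series_majorant r F M1" and G: "has_series_majorant r G M2" and r: "0 \<le> r"
  shows "has_series_majorant r (\<lambda>w u. F w u * G w u) (M1 * M2)"
proof -
  obtain c :: "nat \<Rightarrow> complex" and e :: "nat \<Rightarrow> 'n exponent" and K :: "nat set" and m :: real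
    where maj: "((\<lambda>k. norm (c k) * r ^ total_degree (e k)) has_sum m) K" "m \<le> M1"
      and rep: "\<And>w u. in_polydisc r w u \<Longrightarrow> ((\<lambda>k. c k * monomial (e k) w u) has_sum F w u) K"
    by (rule has_series_majorantE[OF F]) blast
  have M2: "0 \<le> M2"
    using G r by (rule has_series_majorant_nonneg)
  have "(\<lambda>k. norm (c k) * r ^ total_degree (e k) * M2) summable_on K"
    using maj(1) by (intro summable_on_cmult_left) (auto simp: summable_on_def)
  then have sum: "has_series_majorant r (\<lambda>w u. \<Sum>\<^sub>\<infinity>k\<in>K. c k * monomial (e k) w u * G w u)
      (\<Sum>\<^sub>\<infinity>k\<in>K. norm (c k) * r ^ total_degree (e k) * M2)"
    by (rule has_series_majorant_infsum[OF r has_series_majorant_monomial_mult[OF G r]])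
  have "(\<Sum>\<^sub>\<infinity>k\<in>K. norm (c k) * r ^ total_degree (e k) * M2) = m * M2"
    using infsumI[OF maj(1)] by (simp add: infsum_cmult_left')
  also have "\<dots> \<le> M1 * M2"
    using maj(2) M2 by (rule mult_right_mono)
  finally have le: "(\<Sum>\<^sub>\<infinity>k\<in>K. norm (c k) * r ^ total_degree (e k) * M2) \<le> M1 * M2" .
  show ?thesis
  proof (rule has_series_majorant_mono[OF has_series_majorant_cong[OF sum] le])
    fix w u :: "'n \<Rightarrow> complex"
    assume "in_polydisc r w u"
    from has_sum_cmult_left[OF rep[OF this]]
    show "(\<Sum>\<^sub>\<infinity>k\<in>K. c k * monomial (e k) w u * G w u) = F w u * G w u"
      by (rule infsumI)
  qed
qed

lemma has_series_majorant_prod: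
  fixes F :: "'j \<Rightarrow> 'n::finite bivariate"
  assumes "finite J" "\<And>j. j \<in> J \<Longrightarrow> has_series_majorant r (F j) (M j)" "0 \<le> r"
  shows "has_series_majorant r (\<lambda>w u. \<Prod>j\<in>J. F j w u) (\<Prod>j\<in>J. M j)"
  using assms(1,2)
proof (induction J rule: finite_induct)
  case empty
  show ?case
    using has_series_majorant_const[of r 1] by simp
next
  case (insert j J)
  then have "has_series_majorant r (\<lambda>w u. F j w u * (\<Prod>j\<in>J. F j w u)) (M j * (\<Prod>j\<in>J. M j))"
    by (intro has_series_majorant_mult assms(3)) auto
  with insert.hyps show ?case
    by simp
qed

lemma norm_taylor_coefficient_le:
  assumes hol: "f holomorphic_on ball 0 R" and bound: "\<And>x. x \<in> ball 0 R \<Longrightarrow> norm (f x) \<le> B"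
    and r: "0 < r" "2 * r < R"
  shows "norm ((deriv ^^ i) f 0 / fact i) * r ^ i \<le> B * (1/2) ^ i"
proof -
  have "norm ((deriv ^^ i) f 0) \<le> fact i * B / (2 * r) ^ i"
  proof (rule Cauchy_inequality)
    show "f holomorphic_on ball 0 (2 * r)"
      by (rule holomorphic_on_subset[OF hol]) (use r in auto)
    show "continuous_on (cball 0 (2 * r)) f"
      using hol r by (intro holomorphic_on_imp_continuous_on holomorphic_on_subset[OF hol]) auto
    show "norm (0 - x) = 2 * r \<Longrightarrow> norm (f x) \<le> B" for x
      using r by (intro bound) auto
  qed (use r in auto)
  then have "norm ((deriv ^^ i) f 0 / fact i) \<le> B / (2 * r) ^ i"
    by (simp add: norm_divide field_simps)
  then have "norm ((deriv ^^ i) f 0 / fact i) * r ^ i \<le> B / (2 * r) ^ i * r ^ i"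
    using r by (intro mult_right_mono) auto
  also have "\<dots> = B * (1/2) ^ i"
    using r by (simp add: field_simps)
  finally show ?thesis .
qed

lemma has_series_majorant_holomorphic_comp:
  fixes V :: "'n::finite bivariate" and p :: "nat \<Rightarrow> 'n exponent"
  assumes hol: "f holomorphic_on ball 0 R" and bound: "\<And>x. x \<in> ball 0 R \<Longrightarrow> norm (f x) \<le> B"
    and r: "0 < r" "2 * r < R"
    and p: "\<And>i w u. monomial (p i) w u = V w u ^ i" "\<And>i. total_degree (p i) = i"
    and V: "\<And>w u. in_polydisc r w u \<Longrightarrow> norm (V w u) < r"
  shows "has_series_majorant r (\<lambda>w u. f (V w u)) (2 * B)"
proof -
  define c where "c i = (deriv ^^ i) f 0 / fact i" for i
  have coeff_le: "norm (c i) * r ^ i \<le> B * (1/2) ^ i" for i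
    unfolding c_def using hol bound r by (rule norm_taylor_coefficient_le)
  have geometric: "(\<lambda>i. B * (1/2::real) ^ i) sums (2 * B)"
    using sums_mult[OF geometric_sums[of "1/2::real"], of B] by (simp add: mult.commute)
  have summable: "summable (\<lambda>i. norm (c i) * r ^ i)"
    by (rule summable_comparison_test'[OF sums_summable[OF geometric], of 0]) (use coeff_le r in auto)
  show ?thesis
  proof (rule has_series_majorantI[where K = UNIV and c = c and e = p])
    show "((\<lambda>i. norm (c i) * r ^ total_degree (p i)) has_sum (\<Sum>i. norm (c i) * r ^ i)) UNIV"
      using r by (simp add: p(2) sums_nonneg_imp_has_sum summable_sums[OF summable])
    show "(\<Sum>i. norm (c i) * r ^ i) \<le> 2 * B"
      using suminf_le[OF coeff_le summable sums_summable[OF geometric]] sums_unique[OF geometric] by simp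
    fix w u :: "'n \<Rightarrow> complex"
    assume wu: "in_polydisc r w u"
    have "(\<lambda>i. c i * V w u ^ i) sums f (V w u)"
      using holomorphic_power_series[OF hol] V[OF wu] r by (simp add: c_def)
    moreover have "summable (\<lambda>i. norm (c i * V w u ^ i))"
    proof (rule summable_comparison_test'[OF summable, of 0])
      show "norm (norm (c i * V w u ^ i)) \<le> norm (c i) * r ^ i" for i
        using V[OF wu] by (simp add: norm_mult norm_power mult_left_mono power_mono)
    qed
    ultimately show "((\<lambda>i. c i * monomial (p i) w u) has_sum f (V w u)) UNIV"
      by (simp add: p(1) norm_summable_imp_has_sum)
  qed
qed

lemma prod_power_if_eq:
  fixes x :: "'n::finite \<Rightarrow> 'a::comm_monoid_mult"
  shows "(\<Prod>k\<in>UNIV. x k ^ (if k = j then i else 0)) = x j ^ i"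
  by (simp add: if_distrib[of "power _"] cong: if_cong)

lemma has_series_majorant_holomorphic_w:
  fixes j :: "'n::finite"
  assumes "f holomorphic_on ball 0 R" "\<And>x. x \<in> ball 0 R \<Longrightarrow> norm (f x) \<le> B" "0 < r" "2 * r < R"
  shows "has_series_majorant r (\<lambda>(w::'n \<Rightarrow> complex) u. f (w j)) (2 * B)"
  by (rule has_series_majorant_holomorphic_comp[OF assms, where p = "\<lambda>i. (\<lambda>k. if k = j then i else 0, \<lambda>_. 0)"])
     (auto simp: monomial_def total_degree_def prod_power_if_eq in_polydisc_def)

lemma has_series_majorant_holomorphic_u:
  fixes j :: "'n::finite"
  assumes "f holomorphic_on ball 0 R" "\<And>x. x \<in> ball 0 R \<Longrightarrow> norm (f x) \<le> B" "0 < r" "2 * r < R"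
  shows "has_series_majorant r (\<lambda>w (u::'n \<Rightarrow> complex). f (u j)) (2 * B)"
  by (rule has_series_majorant_holomorphic_comp[OF assms, where p = "\<lambda>i. (\<lambda>_. 0, \<lambda>k. if k = j then i else 0)"])
     (auto simp: monomial_def total_degree_def prod_power_if_eq in_polydisc_def)

lemma has_series_majorant_power_series:
  fixes F :: "'n::finite bivariate"
  assumes "has_series_majorant r F M" "0 < r"
  obtains a where "\<And>w u. in_polydisc r w u \<Longrightarrow>
    ((\<lambda>(\<alpha>, \<beta>). a \<alpha> \<beta> * (\<Prod>j\<in>UNIV. w j ^ \<alpha> j) * (\<Prod>j\<in>UNIV. u j ^ \<beta> j)) has_sum F w u) UNIV"
proof -
  obtain c :: "nat \<Rightarrow> complex" and e :: "nat \<Rightarrow> 'n exponent" and K :: "nat set" and m :: real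
    where maj: "((\<lambda>k. norm (c k) * r ^ total_degree (e k)) has_sum m) K"
      and rep: "\<And>w u. in_polydisc r w u \<Longrightarrow> ((\<lambda>k. c k * monomial (e k) w u) has_sum F w u) K"
    by (rule has_series_majorantE[OF assms(1)]) blast
  define fibre where "fibre p = {k \<in> K. e k = p}" for p
  have abs_summable: "(\<lambda>k. norm (c k * monomial (e k) w u)) summable_on K" if "in_polydisc r w u" for w u
    using maj by (rule summable_on_comparison_test[OF has_sum_imp_summable])
                 (auto simp: norm_mult intro!: mult_left_mono norm_monomial_le that)
  define w0 :: "'n \<Rightarrow> complex" where "w0 = (\<lambda>_. of_real (r / 2))"
  have w0: "in_polydisc r w0 w0" and monomial_w0: "monomial p w0 w0 = of_real ((r / 2) ^ total_degree p)" for p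
    using assms(2) by (simp_all add: in_polydisc_def w0_def monomial_def total_degree_def power_sum power_add)
  \<comment> \<open>on a fibre the monomial at \<open>(w0, w0)\<close> is a nonzero constant, so \<open>c\<close> is summable there\<close>
  have c_summable: "c summable_on fibre p" for p
  proof -
    have "(\<lambda>k. c k * monomial (e k) w0 w0) summable_on fibre p"
      by (rule summable_on_subset_banach[OF abs_summable_summable[OF abs_summable[OF w0]]])
         (auto simp: fibre_def)
    then have "(\<lambda>k. c k * monomial p w0 w0) summable_on fibre p"
      by (rule summable_on_cong[THEN iffD1, rotated]) (auto simp: fibre_def)
    then show ?thesis
      using assms(2) summable_on_cmult_left'[of "monomial p w0 w0" c "fibre p"] by (simp add: monomial_w0)
  qed
  show ?thesis
  proof (rule that[of "\<lambda>\<alpha> \<beta>. infsum c (fibre (\<alpha>, \<beta>))"])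
    fix w u :: "'n \<Rightarrow> complex"
    assume wu: "in_polydisc r w u"
    have K_eq: "K = snd ` (SIGMA p:UNIV. fibre p)"
      by (force simp: fibre_def image_iff)
    have inj: "inj_on snd (SIGMA p:UNIV. fibre p)"
      by (auto simp: inj_on_def fibre_def)
    have total: "((\<lambda>q. c (snd q) * monomial (e (snd q)) w u) has_sum F w u) (SIGMA p:UNIV. fibre p)"
      using rep[OF wu] unfolding K_eq has_sum_reindex[OF inj] by (simp add: o_def)
    have on_fibre: "((\<lambda>k. c k * monomial (e k) w u) has_sum (infsum c (fibre p) * monomial p w u)) (fibre p)" for p
    proof -
      have "((\<lambda>k. c k * monomial p w u) has_sum (infsum c (fibre p) * monomial p w u)) (fibre p)"
        by (rule has_sum_cmult_left[OF has_sum_infsum[OF c_summable]])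
      then show ?thesis
        by (rule has_sum_cong[THEN iffD1, rotated]) (simp add: fibre_def)
    qed
    have "((\<lambda>p. infsum c (fibre p) * monomial p w u) has_sum F w u) UNIV"
      by (rule has_sum_Sigma'[OF total]) (simp add: on_fibre)
    then show "((\<lambda>(\<alpha>, \<beta>). infsum c (fibre (\<alpha>, \<beta>)) * (\<Prod>j\<in>UNIV. w j ^ \<alpha> j) * (\<Prod>j\<in>UNIV. u j ^ \<beta> j))
        has_sum F w u) UNIV"
      by (simp add: monomial_def case_prod_unfold mult.assoc)
  qed
qed

section \<open>Growth of the reciprocal Gamma function\<close>

lemma fact_le_pow2_mult_fact:
  assumes "k \<le> n"
  shows "(fact n :: real) \<le> 2 ^ n * fact k * fact (n - k)"
proof -
  have "(fact n :: real) = fact k * fact (n - k) * real (n choose k)"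
    using binomial_fact_lemma[OF assms] by (metis of_nat_fact of_nat_mult)
  also have "\<dots> \<le> fact k * fact (n - k) * 2 ^ n"
    using binomial_le_pow2[of n k] by (intro mult_left_mono) (auto simp flip: of_nat_le_iff)
  finally show ?thesis
    by (simp add: mult_ac)
qed

lemma pochhammer_of_nat_le: "pochhammer (real N + 1) q \<le> 2 ^ (N + q) * fact q"
proof -
  have "fact N * pochhammer (real N + 1) q = (fact (N + q) :: real)"
    using pochhammer_product'[of "1::real" N q] by (simp add: pochhammer_fact add.commute)
  also have "\<dots> \<le> fact N * (2 ^ (N + q) * fact q)"
    using fact_le_pow2_mult_fact[of N "N + q"] by (simp add: mult_ac)
  finally show ?thesis
    by (simp add: mult_le_cancel_left_pos)
qed

lemma norm_pochhammer_ge_fact: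
  fixes t :: complex
  assumes "\<And>i. real i + 1 \<le> norm (t + of_nat i)"
  shows "fact q \<le> norm (pochhammer t q)"
proof (induction q)
  case (Suc q)
  have "fact (Suc q) = fact q * (real q + 1)"
    by (simp add: algebra_simps)
  also have "\<dots> \<le> norm (pochhammer t q) * norm (t + of_nat q)"
    by (rule mult_mono[OF Suc assms]) auto
  finally show ?case
    by (simp add: pochhammer_Suc norm_mult)
qed simp

lemma norm_pochhammer_diff_le:
  fixes t :: complex
  assumes "norm t \<le> real N"
  shows "norm (pochhammer (t - of_nat q) q) \<le> pochhammer (real N + 1) q"
proof (induction q)
  case (Suc q)
  have "norm (t - of_nat (Suc q)) \<le> real N + 1 + real q"
    using norm_triangle_ineq4[of t "of_nat (Suc q)"] assms by (simp only: norm_of_nat)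
  have "pochhammer (t - of_nat (Suc q)) (Suc q) = (t - of_nat (Suc q)) * pochhammer (t - of_nat q) q"
    by (simp add: pochhammer_rec algebra_simps)
  then have "norm (pochhammer (t - of_nat (Suc q)) (Suc q))
      = norm (t - of_nat (Suc q)) * norm (pochhammer (t - of_nat q) q)"
    by (simp add: norm_mult)
  also have "\<dots> \<le> (real N + 1 + real q) * pochhammer (real N + 1) q"
    using \<open>norm (t - of_nat (Suc q)) \<le> real N + 1 + real q\<close>
    by (intro mult_mono Suc) (auto intro: pochhammer_nonneg)
  also have "\<dots> = pochhammer (real N + 1) (Suc q)"
    by (simp add: pochhammer_Suc algebra_simps)
  finally show ?case .
qed simp

lemma norm_rGamma_add_nat_le:
  fixes t :: complex
  assumes t: "norm t \<le> real N" and B: "\<And>k. k \<le> Suc N \<Longrightarrow> norm (rGamma (t + of_nat k)) \<le> B"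
  shows "norm (rGamma (t + of_nat q)) \<le> B * fact (Suc N) * 2 ^ q / fact q"
proof (cases "q \<le> Suc N")
  case True
  have "(fact (Suc N) :: real) \<le> fact (Suc N) * 2 ^ q"
    using mult_left_mono[of 1 "2 ^ q" "fact (Suc N) :: real"] by simp
  with fact_mono[OF True] have "fact q \<le> fact (Suc N) * (2::real) ^ q"
    by (rule order.trans)
  have "norm (rGamma (t + of_nat q)) * fact q \<le> B * fact q"
    using B[OF True] by (rule mult_right_mono) simp
  also have "\<dots> \<le> B * (fact (Suc N) * 2 ^ q)"
    using B[of 0] \<open>fact q \<le> fact (Suc N) * 2 ^ q\<close>
    by (intro mult_left_mono) (auto intro: order.trans[OF norm_ge_zero])
  finally show ?thesis
    by (simp add: field_simps)
next
  case False
  define p where "p = q - Suc N"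
  have q: "q = Suc N + p"
    using False by (simp add: p_def)
  \<comment> \<open>shift down to the range where \<open>B\<close> applies: \<open>rGamma (t + N + 1) = (t + N + 1)\<^sub>p rGamma (t + q)\<close>\<close>
  have "fact p \<le> norm (pochhammer (t + of_nat (Suc N)) p)"
  proof (rule norm_pochhammer_ge_fact)
    fix i
    have "of_nat (Suc N + i) = (t + of_nat (Suc N) + of_nat i) - t"
      by simp
    then have "real (Suc N + i) \<le> norm (t + of_nat (Suc N) + of_nat i) + norm t"
      using norm_triangle_ineq4[of "t + of_nat (Suc N) + of_nat i" t] by (metis norm_of_nat)
    then show "real i + 1 \<le> norm (t + of_nat (Suc N) + of_nat i)"
      using t by simp
  qed
  then have "fact p * norm (rGamma (t + of_nat q))
      \<le> norm (pochhammer (t + of_nat (Suc N)) p) * norm (rGamma (t + of_nat q))"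
    by (rule mult_right_mono) simp
  also have "\<dots> = norm (rGamma (t + of_nat (Suc N)))"
    using pochhammer_rGamma[of "t + of_nat (Suc N)" p] by (simp add: q add.assoc norm_mult)
  also have "\<dots> \<le> B"
    by (rule B) simp
  finally have "norm (rGamma (t + of_nat q)) \<le> B / fact p"
    by (simp add: field_simps)
  also have "\<dots> \<le> B * fact (Suc N) * 2 ^ q / fact q"
  proof -
    have "0 \<le> B"
      using B[of 0] by (auto intro: order.trans[OF norm_ge_zero])
    then have "B * fact q \<le> B * (2 ^ q * fact (Suc N) * fact p)"
      using fact_le_pow2_mult_fact[of "Suc N" q] False by (intro mult_left_mono) (simp_all add: p_def)
    then show ?thesis
      by (simp add: field_simps)
  qed
  finally show ?thesis .
qed

lemma norm_rGamma_diff_nat_le: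
  fixes t :: complex
  assumes "norm t \<le> real N"
  shows "norm (rGamma (t - of_nat q)) \<le> norm (rGamma t) * 2 ^ N * 2 ^ q * fact q"
proof -
  have "norm (rGamma (t - of_nat q)) = norm (pochhammer (t - of_nat q) q) * norm (rGamma t)"
    using pochhammer_rGamma[of "t - of_nat q" q] by (simp add: norm_mult)
  also have "\<dots> \<le> 2 ^ (N + q) * fact q * norm (rGamma t)"
    using norm_pochhammer_diff_le[OF assms, of q] pochhammer_of_nat_le[of N q]
    by (intro mult_right_mono) auto
  finally show ?thesis
    by (simp add: power_add mult_ac)
qed

(* Up to a factor 2^|m|, the size of 1/Gamma(m + 1 + s) for bounded s (see rGamma_growth). *)
definition fact_ratio :: "int \<Rightarrow> real" where
  "fact_ratio m = fact (nat (- m)) / fact (nat m)"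

lemma fact_ratio_pos: "0 < fact_ratio m"
  by (simp add: fact_ratio_def)

lemma norm_rGamma_shift_le:
  fixes s0 s :: complex
  assumes N: "norm s0 + 1 \<le> real N"
    and B: "\<And>x. x \<in> cball s0 (real N + 2) \<Longrightarrow> norm (rGamma x) \<le> B"
    and BK: "B * fact (Suc N) \<le> K" "B * 2 ^ N \<le> K"
    and s: "norm (s - (s0 + of_int m)) \<le> 1"
  shows "norm (rGamma s) \<le> K * 2 ^ nat \<bar>m\<bar> * fact_ratio m"
proof -
  define t where "t = s - of_int m"
  have t_s0: "norm (t - s0) \<le> 1"
    using s by (simp add: t_def algebra_simps)
  then have t: "norm t \<le> real N"
    using norm_triangle_ineq2[of t s0] N by linarith
  have B_shift: "norm (rGamma (t + of_nat k)) \<le> B" if "k \<le> Suc N" for k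
  proof (rule B)
    have "norm (t + of_nat k - s0) \<le> norm (t - s0) + real k"
      using norm_triangle_ineq[of "t - s0" "of_nat k"] by (simp add: algebra_simps)
    then show "t + of_nat k \<in> cball s0 (real N + 2)"
      using t_s0 that by (simp add: dist_norm norm_minus_commute)
  qed
  show ?thesis
  proof (cases "0 \<le> m")
    case True
    define q where "q = nat m"
    have "norm (rGamma s) \<le> B * fact (Suc N) * 2 ^ q / fact q"
      using norm_rGamma_add_nat_le[OF t B_shift, of q] True by (simp add: t_def q_def)
    also have "\<dots> \<le> K * 2 ^ q / fact q"
      using BK(1) by (intro divide_right_mono mult_right_mono) auto
    finally show ?thesis
      using True by (simp add: fact_ratio_def q_def)
  next
    case False
    define q where "q = nat (- m)"
    have "norm (rGamma s) \<le> norm (rGamma t) * 2 ^ N * 2 ^ q * fact q"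
      using norm_rGamma_diff_nat_le[OF t, of q] False by (simp add: t_def q_def)
    also have "\<dots> \<le> K * 2 ^ q * fact q"
    proof -
      have "norm (rGamma t) * 2 ^ N \<le> B * 2 ^ N"
        using B_shift[of 0] by (intro mult_right_mono) auto
      also have "\<dots> \<le> K"
        by (fact BK(2))
      finally show ?thesis
        by (intro mult_right_mono) auto
    qed
    finally show ?thesis
      using False by (simp add: fact_ratio_def q_def)
  qed
qed

lemma rGamma_growth:
  fixes s0 :: complex
  obtains K where "0 < K"
    "\<And>m s. norm (s - (s0 + of_int m)) \<le> 1 \<Longrightarrow> norm (rGamma s) \<le> K * 2 ^ nat \<bar>m\<bar> * fact_ratio m"
proof -
  define N where "N = nat \<lceil>norm s0 + 1\<rceil>"
  have N: "norm s0 + 1 \<le> real N"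
    unfolding N_def by linarith
  have "bounded (rGamma ` cball s0 (real N + 2))"
    by (intro compact_imp_bounded compact_continuous_image continuous_on_rGamma) auto
  then obtain B where B: "\<And>x. x \<in> cball s0 (real N + 2) \<Longrightarrow> norm (rGamma x) \<le> B"
    unfolding bounded_iff by blast
  have "0 \<le> B"
    using B[of s0] by (auto intro: order.trans[OF norm_ge_zero])
  define K where "K = B * (fact (Suc N) + 2 ^ N) + 1"
  have "0 \<le> B * fact (Suc N)" "0 \<le> B * 2 ^ N"
    using \<open>0 \<le> B\<close> by simp_all
  then have "0 < K" and BK: "B * fact (Suc N) \<le> K" "B * 2 ^ N \<le> K"
    unfolding K_def distrib_left by linarith+
  then show ?thesis
    using that norm_rGamma_shift_le[OF N B BK] by blast
qed

section \<open>Majorants of a single factor of the series\<close>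

lemma exp_has_sum:
  fixes x :: "'a::{real_normed_field,banach}"
  shows "((\<lambda>k. x ^ k /\<^sub>R fact k) has_sum exp x) UNIV"
proof -
  have "summable (\<lambda>k. norm (x ^ k /\<^sub>R fact k))"
    using summable_exp[of "norm x"] by (simp add: norm_power divide_inverse)
  then show ?thesis
    using exp_converges[of x] by (rule norm_summable_imp_has_sum)
qed

lemma abs_ln_norm_add_diff_le:
  fixes z x :: complex
  assumes "2 * norm x \<le> norm z" "z \<noteq> 0"
  shows "\<bar>ln (norm (z + x)) - ln (norm z)\<bar> \<le> 1"
proof -
  have z: "0 < norm z"
    using assms(2) by simp
  have close: "norm z / 2 \<le> norm (z + x)" "norm (z + x) \<le> 3 / 2 * norm z"
    using assms(1) norm_triangle_ineq2[of z "-x"] norm_triangle_ineq[of z x] by auto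
  have "ln (norm z) - ln 2 \<le> ln (norm (z + x))"
    using ln_mono[OF close(1)] z by (simp add: ln_div)
  moreover have "ln (norm (z + x)) \<le> ln (3 / 2 * norm z)"
    using close z by (intro ln_mono) auto
  moreover have "ln (3 / 2 * norm z) = ln (3 / 2) + ln (norm z)"
    using z by (subst ln_mult) auto
  moreover have "ln (2::real) \<le> 1" "ln (3 / 2 :: real) \<le> 1"
    using ln_le_minus_one[of "2::real"] ln_le_minus_one[of "3/2::real"] by simp_all
  ultimately show ?thesis
    by linarith
qed

lemma norm_Ln_le: "z \<noteq> 0 \<Longrightarrow> norm (Ln z) \<le> \<bar>ln (norm z)\<bar> + pi"
  using cmod_le[of "Ln z"] mpi_less_Im_Ln[of z] Im_Ln_le_pi[of z] by simp

lemma Ln_local_bounds: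
  fixes z0 :: complex
  assumes "z0 \<noteq> 0" "Arg z0 < pi"
  obtains R where "0 < R" "R \<le> 1"
    "(\<lambda>x. Ln (z0 + x)) holomorphic_on ball 0 R"
    "\<And>x. x \<in> ball 0 R \<Longrightarrow> z0 + x \<noteq> 0"
    "\<And>x. x \<in> ball 0 R \<Longrightarrow> \<bar>ln (norm (z0 + x)) - ln (norm z0)\<bar> \<le> 1"
    "\<And>x. x \<in> ball 0 R \<Longrightarrow> norm (Ln (z0 + x)) \<le> \<bar>ln (norm z0)\<bar> + 1 + pi"
proof -
  have "z0 \<notin> \<real>\<^sub>\<le>\<^sub>0"
    using assms Arg_eq_pi[of z0] by (auto simp: complex_nonpos_Reals_iff complex_eq_iff)
  moreover have "open (- \<real>\<^sub>\<le>\<^sub>0 :: complex set)"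
    by (simp add: open_Compl)
  ultimately obtain e where e: "0 < e" "ball z0 e \<subseteq> - \<real>\<^sub>\<le>\<^sub>0"
    using open_contains_ball by blast
  define R where "R = min (min e (norm z0 / 2)) 1"
  have R: "0 < R" "R \<le> 1"
    using e assms(1) by (auto simp: R_def)
  have not_nonpos: "z0 + x \<notin> \<real>\<^sub>\<le>\<^sub>0" if "x \<in> ball 0 R" for x
  proof -
    have "z0 + x \<in> ball z0 e"
      using that by (simp add: R_def dist_norm)
    then show ?thesis
      using e(2) by blast
  qed
  have nonzero: "z0 + x \<noteq> 0" if "x \<in> ball 0 R" for x
    using not_nonpos[OF that] by auto
  have ln_close: "\<bar>ln (norm (z0 + x)) - ln (norm z0)\<bar> \<le> 1" if "x \<in> ball 0 R" for x
    using that assms(1) by (intro abs_ln_norm_add_diff_le) (auto simp: R_def)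
  show ?thesis
  proof (rule that[OF R _ nonzero ln_close])
    show "(\<lambda>x. Ln (z0 + x)) holomorphic_on ball 0 R"
      using not_nonpos by (intro holomorphic_on_Ln' holomorphic_intros) auto
    show "norm (Ln (z0 + x)) \<le> \<bar>ln (norm z0)\<bar> + 1 + pi" if "x \<in> ball 0 R" for x
      using norm_Ln_le[OF nonzero[OF that]] ln_close[OF that] by linarith
  qed
qed

lemma has_series_majorant_exp_Ln:
  fixes j :: "'n::finite" and m :: int
  assumes hol: "(\<lambda>x. Ln (z0 + x)) holomorphic_on ball 0 R"
    and nonzero: "\<And>x. x \<in> ball 0 R \<Longrightarrow> z0 + x \<noteq> 0"
    and ln_close: "\<And>x. x \<in> ball 0 R \<Longrightarrow> \<bar>ln (norm (z0 + x)) - ln (norm z0)\<bar> \<le> 1"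
    and Ln_bound: "\<And>x. x \<in> ball 0 R \<Longrightarrow> norm (Ln (z0 + x)) \<le> \<Lambda>"
    and r: "0 < r" "2 * r < R"
  shows "has_series_majorant r (\<lambda>(w::'n \<Rightarrow> complex) u. exp ((of_int m + lam0) * Ln (z0 + w j)))
           (2 * exp (real_of_int m * ln (norm z0) + \<bar>m\<bar> + norm lam0 * \<Lambda>))"
proof (rule has_series_majorant_holomorphic_w[OF _ _ r])
  show "(\<lambda>x. exp ((of_int m + lam0) * Ln (z0 + x))) holomorphic_on ball 0 R"
    by (intro holomorphic_intros hol)
  fix x :: complex
  assume x: "x \<in> ball 0 R"
  have "real_of_int m * (ln (norm (z0 + x)) - ln (norm z0)) \<le> \<bar>m\<bar>"
    using mult_left_mono[OF ln_close[OF x], of "\<bar>real_of_int m\<bar>"] abs_ge_self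
    by (metis abs_mult mult.right_neutral of_int_abs order.trans abs_ge_zero)
  moreover have "Re (lam0 * Ln (z0 + x)) \<le> norm lam0 * norm (Ln (z0 + x))"
    using complex_Re_le_cmod[of "lam0 * Ln (z0 + x)"] by (simp only: norm_mult)
  moreover have "norm lam0 * norm (Ln (z0 + x)) \<le> norm lam0 * \<Lambda>"
    using Ln_bound[OF x] by (rule mult_left_mono) simp
  ultimately have "Re ((of_int m + lam0) * Ln (z0 + x)) \<le> real_of_int m * ln (norm z0) + \<bar>m\<bar> + norm lam0 * \<Lambda>"
    using nonzero[OF x] by (simp add: algebra_simps)
  then show "norm (exp ((of_int m + lam0) * Ln (z0 + x))) \<le> exp (real_of_int m * ln (norm z0) + \<bar>m\<bar> + norm lam0 * \<Lambda>)"
    by simp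
qed

lemma has_series_majorant_exp_mult_Ln:
  fixes j :: "'n::finite"
  assumes hol: "(\<lambda>x. Ln (z0 + x)) holomorphic_on ball 0 R"
    and Ln_bound: "\<And>x. x \<in> ball 0 R \<Longrightarrow> norm (Ln (z0 + x)) \<le> \<Lambda>"
    and r: "0 < r" "2 * r < R" "r \<le> 1"
  shows "has_series_majorant r (\<lambda>(w::'n \<Rightarrow> complex) u. exp (u j * Ln (z0 + w j))) (2 * exp \<Lambda>)"
proof -
  have "0 \<le> \<Lambda>"
    using Ln_bound[of 0] r by (auto intro: order.trans[OF norm_ge_zero])
  define M where "M k = 2 * (r * \<Lambda>) ^ k /\<^sub>R fact k" for k
  \<comment> \<open>expand \<open>exp (u j * L)\<close> as \<open>\<Sum>k. u j ^ k * L ^ k / k!\<close>; \<open>L ^ k\<close> has majorant \<open>2 * \<Lambda> ^ k\<close>\<close>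
  have summand: "has_series_majorant r
      (\<lambda>(w::'n \<Rightarrow> complex) u. of_real (1 / fact k) * monomial (\<lambda>_. 0, \<lambda>i. if i = j then k else 0) w u * Ln (z0 + w j) ^ k)
      (M k)" for k
  proof -
    have "has_series_majorant r (\<lambda>(w::'n \<Rightarrow> complex) u. Ln (z0 + w j) ^ k) (2 * \<Lambda> ^ k)"
    proof (rule has_series_majorant_holomorphic_w[OF _ _ r(1,2)])
      show "(\<lambda>x. Ln (z0 + x) ^ k) holomorphic_on ball 0 R"
        by (intro holomorphic_intros hol)
      show "norm (Ln (z0 + x) ^ k) \<le> \<Lambda> ^ k" if "x \<in> ball 0 R" for x
        unfolding norm_power by (rule power_mono[OF Ln_bound[OF that] norm_ge_zero])
    qed
    from has_series_majorant_monomial_mult[OF this, of "of_real (1 / fact k)" "(\<lambda>_. 0, \<lambda>i. if i = j then k else 0)"] r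
    show ?thesis
      by (simp add: M_def total_degree_def norm_divide divide_simps mult_ac)
  qed
  have M: "(M has_sum 2 * exp (r * \<Lambda>)) UNIV"
    unfolding M_def using has_sum_cmult_right[OF exp_has_sum[of "r * \<Lambda>"], of 2] by (simp add: mult_ac)
  have series: "has_series_majorant r
      (\<lambda>w u. \<Sum>\<^sub>\<infinity>k. of_real (1 / fact k) * monomial (\<lambda>_. 0, \<lambda>i. if i = j then k else 0) w u * Ln (z0 + w j) ^ k)
      (\<Sum>\<^sub>\<infinity>k. M k)"
    using M by (intro has_series_majorant_infsum[OF less_imp_le[OF r(1)] summand]) (auto simp: summable_on_def)
  have le: "(\<Sum>\<^sub>\<infinity>k. M k) \<le> 2 * exp \<Lambda>"
    using infsumI[OF M] r \<open>0 \<le> \<Lambda>\<close> by (simp add: mult_left_le_one_le)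
  show ?thesis
  proof (rule has_series_majorant_cong[OF has_series_majorant_mono[OF series le]])
    fix w u :: "'n \<Rightarrow> complex"
    show "(\<Sum>\<^sub>\<infinity>k. of_real (1 / fact k) * monomial (\<lambda>_. 0, \<lambda>i. if i = j then k else 0) w u * Ln (z0 + w j) ^ k)
        = exp (u j * Ln (z0 + w j))"
      using infsumI[OF exp_has_sum[of "u j * Ln (z0 + w j)"]]
      by (simp add: monomial_def prod_power_if_eq power_mult_distrib scaleR_conv_of_real divide_inverse mult_ac)
  qed
qed

lemma zpow_div_Gamma_eq:
  assumes "z \<noteq> 0"
  shows "zpow z (a + b) / Gamma (a + b + 1) = exp (a * Ln z) * exp (b * Ln z) * rGamma (a + b + 1)"
  using assms by (simp add: zpow_def Ln_Arg divide_inverse rGamma_inverse_Gamma distrib_right exp_add)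

lemma has_series_majorant_series_factor:
  fixes z0 lam0 :: complex and j :: "'n::finite"
  assumes "z0 \<noteq> 0" "Arg z0 < pi"
  obtains R C where "0 < R" "0 < C"
    "\<And>r m. 0 < r \<Longrightarrow> 2 * r < R \<Longrightarrow> has_series_majorant r
        (\<lambda>(w::'n \<Rightarrow> complex) u. zpow (z0 + w j) (of_int m + (lam0 + u j)) / Gamma (of_int m + (lam0 + u j) + 1))
        (C * exp (real_of_int m * ln (norm z0) + \<bar>m\<bar>) * 2 ^ nat \<bar>m\<bar> * fact_ratio m)"
proof -
  obtain R where R: "0 < R" "R \<le> 1" and hol: "(\<lambda>x. Ln (z0 + x)) holomorphic_on ball 0 R"
    and nonzero: "\<And>x. x \<in> ball 0 R \<Longrightarrow> z0 + x \<noteq> 0"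
    and ln_close: "\<And>x. x \<in> ball 0 R \<Longrightarrow> \<bar>ln (norm (z0 + x)) - ln (norm z0)\<bar> \<le> 1"
    and Ln_bound: "\<And>x. x \<in> ball 0 R \<Longrightarrow> norm (Ln (z0 + x)) \<le> \<bar>ln (norm z0)\<bar> + 1 + pi"
    using Ln_local_bounds[OF assms] by blast
  obtain K where K: "0 < K"
    "\<And>m s. norm (s - (lam0 + 1 + of_int m)) \<le> 1 \<Longrightarrow> norm (rGamma s) \<le> K * 2 ^ nat \<bar>m\<bar> * fact_ratio m"
    using rGamma_growth by blast
  define \<Lambda> where "\<Lambda> = \<bar>ln (norm z0)\<bar> + 1 + pi"
  define C where "C = 8 * exp (norm lam0 * \<Lambda>) * exp \<Lambda> * K"
  show ?thesis
  proof (rule that[OF R(1)])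
    show "0 < C"
      using K(1) by (simp add: C_def)
    fix r :: real and m :: int
    assume r: "0 < r" "2 * r < R"
    have "has_series_majorant r (\<lambda>(w::'n \<Rightarrow> complex) u.
        exp ((of_int m + lam0) * Ln (z0 + w j)) * exp (u j * Ln (z0 + w j)) * rGamma (of_int m + lam0 + u j + 1))
        (2 * exp (real_of_int m * ln (norm z0) + \<bar>m\<bar> + norm lam0 * \<Lambda>) * (2 * exp \<Lambda>)
          * (2 * (K * 2 ^ nat \<bar>m\<bar> * fact_ratio m)))"
    proof (intro has_series_majorant_mult)
      show "has_series_majorant r (\<lambda>(w::'n \<Rightarrow> complex) u. exp ((of_int m + lam0) * Ln (z0 + w j)))
          (2 * exp (real_of_int m * ln (norm z0) + \<bar>m\<bar> + norm lam0 * \<Lambda>))"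
        using hol nonzero ln_close Ln_bound r unfolding \<Lambda>_def by (rule has_series_majorant_exp_Ln)
      show "has_series_majorant r (\<lambda>(w::'n \<Rightarrow> complex) u. exp (u j * Ln (z0 + w j))) (2 * exp \<Lambda>)"
        using hol Ln_bound r R(2) unfolding \<Lambda>_def by (intro has_series_majorant_exp_mult_Ln) auto
      show "has_series_majorant r (\<lambda>w (u::'n \<Rightarrow> complex). rGamma (of_int m + lam0 + u j + 1))
          (2 * (K * 2 ^ nat \<bar>m\<bar> * fact_ratio m))"
        using r R(2) by (intro has_series_majorant_holomorphic_u[where R = 1] holomorphic_intros K(2))
                        (auto simp: algebra_simps)
    qed (use r in auto)
    moreover have "zpow (z0 + w j) (of_int m + (lam0 + u j)) / Gamma (of_int m + (lam0 + u j) + 1) =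
        exp ((of_int m + lam0) * Ln (z0 + w j)) * exp (u j * Ln (z0 + w j)) * rGamma (of_int m + lam0 + u j + 1)"
      if "in_polydisc r w u" for w u :: "'n \<Rightarrow> complex"
    proof -
      have "norm (w j) < r"
        using that by (simp add: in_polydisc_def)
      with r have "z0 + w j \<noteq> 0"
        by (intro nonzero) simp
      then show ?thesis
        using zpow_div_Gamma_eq[of "z0 + w j" "of_int m + lam0" "u j"] by (simp add: add.assoc)
    qed
    ultimately show "has_series_majorant r
        (\<lambda>(w::'n \<Rightarrow> complex) u. zpow (z0 + w j) (of_int m + (lam0 + u j)) / Gamma (of_int m + (lam0 + u j) + 1))
        (C * exp (real_of_int m * ln (norm z0) + \<bar>m\<bar>) * 2 ^ nat \<bar>m\<bar> * fact_ratio m)"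
      by (auto simp: C_def exp_add mult_ac elim!: has_series_majorant_cong)
  qed
qed

section \<open>Lattice estimates\<close>

lemma prod_fact_le_fact_sum:
  assumes "finite J"
  shows "(\<Prod>j\<in>J. fact (a j) :: real) \<le> fact (\<Sum>j\<in>J. a j)"
  using assms
proof (induction J rule: finite_induct)
  case (insert x J)
  have "(fact (a x) * fact (\<Sum>j\<in>J. a j) :: real) \<le> fact (a x + (\<Sum>j\<in>J. a j))"
    using fact_fact_dvd_fact[of "a x" "\<Sum>j\<in>J. a j"] by (metis dvd_imp_le fact_gt_zero of_nat_fact of_nat_le_iff of_nat_mult)
  then show ?case
    using insert by (simp add: order.trans[OF mult_left_mono[OF insert.IH]])
qed simp

lemma fact_sum_le:
  assumes "finite J"
  shows "(fact (\<Sum>j\<in>J. a j) :: real) \<le> 2 ^ (card J * (\<Sum>j\<in>J. a j)) * (\<Prod>j\<in>J. fact (a j))"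
  using assms
proof (induction J rule: finite_induct)
  case (insert x J)
  define S where "S = (\<Sum>j\<in>J. a j)"
  have "(fact (a x + S) :: real) \<le> 2 ^ (a x + S) * fact (a x) * fact S"
    using fact_le_pow2_mult_fact[of "a x" "a x + S"] by simp
  also have "\<dots> \<le> 2 ^ (a x + S) * fact (a x) * (2 ^ (card J * S) * (\<Prod>j\<in>J. fact (a j)))"
    using insert.IH by (intro mult_left_mono) (auto simp: S_def)
  also have "\<dots> = 2 ^ (a x + S + card J * S) * (fact (a x) * (\<Prod>j\<in>J. fact (a j)))"
    by (simp add: power_add mult_ac)
  also have "\<dots> \<le> 2 ^ ((card J + 1) * (a x + S)) * (fact (a x) * (\<Prod>j\<in>J. fact (a j)))"
    by (intro mult_right_mono power_increasing mult_nonneg_nonneg prod_nonneg) (auto simp: algebra_simps)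
  finally show ?case
    using insert by (simp add: S_def)
qed simp

lemma prod_fact_ratio_le:
  fixes l :: "'n::finite \<Rightarrow> int"
  assumes "(\<Sum>j\<in>UNIV. l j) = 0"
  shows "(\<Prod>j\<in>UNIV. fact_ratio (l j)) \<le> 2 ^ (CARD('n) * (\<Sum>j\<in>UNIV. nat \<bar>l j\<bar>))"
proof -
  define a where "a j = nat (l j)" for j
  define b where "b j = nat (- l j)" for j
  have "l j = int (a j) - int (b j)" for j
    by (simp add: a_def b_def)
  then have "int (\<Sum>j\<in>UNIV. a j) - int (\<Sum>j\<in>UNIV. b j) = 0"
    using assms by (simp add: sum_subtractf)
  then have ab: "(\<Sum>j\<in>UNIV. a j) = (\<Sum>j\<in>UNIV. b j)"
    by linarith
  have "(\<Prod>j\<in>UNIV. fact_ratio (l j)) = (\<Prod>j\<in>UNIV. fact (b j)) / (\<Prod>j\<in>UNIV. fact (a j))"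
    by (simp add: fact_ratio_def a_def b_def prod_dividef)
  also have "\<dots> \<le> fact (\<Sum>j\<in>UNIV. a j) / (\<Prod>j\<in>UNIV. fact (a j))"
    using prod_fact_le_fact_sum[of UNIV b] ab by (intro divide_right_mono) (auto intro: prod_nonneg)
  also have "\<dots> \<le> 2 ^ (CARD('n) * (\<Sum>j\<in>UNIV. a j))"
    using fact_sum_le[of UNIV a] by (simp add: divide_le_eq prod_pos)
  also have "\<dots> \<le> 2 ^ (CARD('n) * (\<Sum>j\<in>UNIV. nat \<bar>l j\<bar>))"
    by (intro power_increasing mult_left_mono sum_mono) (auto simp: a_def)
  finally show ?thesis .
qed

lemma summable_on_exp_neg_sum: "(\<lambda>x::'n::finite \<Rightarrow> nat. exp (- real (\<Sum>j\<in>UNIV. x j))) summable_on UNIV"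
proof -
  have "summable (\<lambda>i::nat. norm (exp (-1::real) ^ i))"
    by (simp add: summable_geometric)
  then have "Infinite_Set_Sum.abs_summable_on (\<lambda>i::nat. exp (-1::real) ^ i) UNIV"
    by (simp add: abs_summable_on_nat_iff')
  then have "Infinite_Set_Sum.abs_summable_on (\<lambda>g. \<Prod>j\<in>UNIV. exp (-1::real) ^ g j) (PiE (UNIV::'n set) (\<lambda>_. UNIV))"
    by (intro abs_summable_on_prod_PiE) auto
  then show ?thesis
    by (simp add: abs_summable_equivalent[symmetric] PiE_UNIV_domain flip: exp_of_nat_mult exp_sum sum_negf)
qed

lemma sum_Lat_eq_0:
  assumes "has_height_one v" "l \<in> Lat v"
  shows "(\<Sum>j\<in>UNIV. l j) = 0"
proof -
  obtain h where h: "\<And>j. (\<Sum>i\<in>UNIV. h i * v j i) = 1"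
    using assms(1) unfolding has_height_one_def by blast
  have "(\<Sum>j\<in>UNIV. l j) = (\<Sum>j\<in>UNIV. \<Sum>i\<in>UNIV. l j * (h i * v j i))"
    by (simp add: h flip: sum_distrib_left)
  also have "\<dots> = (\<Sum>i\<in>UNIV. h i * (\<Sum>j\<in>UNIV. l j * v j i))"
    by (subst sum.swap) (simp add: sum_distrib_left mult.left_commute)
  also have "\<dots> = 0"
    using assms(2) by (simp add: Lat_def)
  finally show ?thesis .
qed

lemma Ccone_of_Lat_iff:
  assumes "l \<in> Lat v"
  shows "(\<lambda>j. real_of_int (l j)) \<in> Ccone v I \<longleftrightarrow> (\<forall>j. j \<notin> I \<longrightarrow> 0 \<le> l j)"
proof -
  have "(\<lambda>j. real_of_int (l j)) \<in> LatR v"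
    unfolding LatR_def using assms by (intro CollectI exI[of _ "{l}"] exI[of _ "\<lambda>_. 1"]) auto
  then show ?thesis
    by (auto simp: Ccone_def)
qed

lemma lin_indep_on_bounded_below:
  fixes v :: "'n::finite \<Rightarrow> 'd::finite \<Rightarrow> int"
  assumes "lin_indep_on v I"
  obtains B where "0 < B" "\<And>x :: real^'n. B * norm x \<le>
    norm ((\<chi> i. \<Sum>j\<in>UNIV. vec_nth x j * real_of_int (v j i)), (\<chi> j. if j \<in> I then 0 else vec_nth x j))"
proof -
  define f :: "real^'n \<Rightarrow> (real^'d) \<times> (real^'n)" where
    "f x = ((\<chi> i. \<Sum>j\<in>UNIV. vec_nth x j * real_of_int (v j i)), (\<chi> j. if j \<in> I then 0 else vec_nth x j))" for x
  have lin: "linear f"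
    by (rule linearI) (simp_all add: f_def vec_eq_iff sum.distrib algebra_simps sum_distrib_left)
  have "x = 0" if "f x = 0" for x
  proof -
    have "fst (f x) = 0" "snd (f x) = 0"
      using that by simp_all
    then have "(\<Sum>j\<in>UNIV. vec_nth x j * real_of_int (v j i)) = 0" "j \<notin> I \<Longrightarrow> vec_nth x j = 0" for i j
      by (auto simp: f_def vec_eq_iff dest!: spec[of _ i] spec[of _ j])
    then have "\<forall>j. vec_nth x j = 0"
      using assms unfolding lin_indep_on_def by blast
    then show ?thesis
      by (simp add: vec_eq_iff)
  qed
  then have "inj f"
    by (simp add: linear_injective_0[OF lin])
  then show ?thesis
    using that linear_inj_bounded_below_pos[OF lin] unfolding f_def by blast
qed

lemma Lat_l1_norm_le_outside:
  fixes v :: "'n::finite \<Rightarrow> 'd::finite \<Rightarrow> int"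
  assumes "lin_indep_on v I"
  obtains M where "0 \<le> M"
    "\<And>l. l \<in> Lat v \<Longrightarrow> (\<Sum>j\<in>UNIV. \<bar>real_of_int (l j)\<bar>) \<le> M * (\<Sum>j\<in>-I. \<bar>real_of_int (l j)\<bar>)"
proof -
  obtain B where B: "0 < B" and below: "\<And>x :: real^'n. B * norm x \<le>
      norm ((\<chi> i. \<Sum>j\<in>UNIV. vec_nth x j * real_of_int (v j i)), (\<chi> j. if j \<in> I then 0 else vec_nth x j))"
    using lin_indep_on_bounded_below[OF assms] by blast
  show ?thesis
  proof (rule that[of "real CARD('n) / B"])
    show "0 \<le> real CARD('n) / B"
      using B by simp
    fix l
    assume l: "l \<in> Lat v"
    define x :: "real^'n" where "x = (\<chi> j. real_of_int (l j))"
    have "(\<chi> i. \<Sum>j\<in>UNIV. vec_nth x j * real_of_int (v j i)) = 0"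
      using l by (simp add: x_def Lat_def vec_eq_iff flip: of_int_mult of_int_sum)
    moreover have "(\<chi> j. if j \<in> I then 0 else vec_nth x j) = (\<chi> j. if j \<in> I then 0 else real_of_int (l j))"
      by (simp add: x_def vec_eq_iff)
    ultimately have "B * norm x \<le> norm (\<chi> j. if j \<in> I then 0 else real_of_int (l j))"
      using below[of x] by (simp add: norm_Pair)
    also have "\<dots> \<le> (\<Sum>j\<in>UNIV. \<bar>vec_nth (\<chi> j. if j \<in> I then 0 else real_of_int (l j)) j\<bar>)"
      by (rule norm_le_l1_cart)
    also have "\<dots> = (\<Sum>j\<in>-I. \<bar>real_of_int (l j)\<bar>)"
      by (simp add: if_distrib sum.If_cases Compl_eq_Diff_UNIV)
    finally have x_le: "B * norm x \<le> (\<Sum>j\<in>-I. \<bar>real_of_int (l j)\<bar>)" .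
    have "(\<Sum>j\<in>UNIV. \<bar>real_of_int (l j)\<bar>) \<le> (\<Sum>j\<in>(UNIV::'n set). norm x)"
      by (rule sum_mono) (metis component_le_norm_cart vec_lambda_beta x_def)
    also have "\<dots> \<le> real CARD('n) / B * (\<Sum>j\<in>-I. \<bar>real_of_int (l j)\<bar>)"
      using B x_le by (simp add: field_simps mult_left_mono)
    finally show "(\<Sum>j\<in>UNIV. \<bar>real_of_int (l j)\<bar>) \<le> real CARD('n) / B * (\<Sum>j\<in>-I. \<bar>real_of_int (l j)\<bar>)" .
  qed
qed

lemma inj_on_Lat_outside:
  fixes v :: "'n::finite \<Rightarrow> 'd::finite \<Rightarrow> int"
  assumes "lin_indep_on v I"
  shows "inj_on (\<lambda>l j. if j \<in> I then 0 else nat (l j)) (Lat v \<inter> {l. \<forall>j. j \<notin> I \<longrightarrow> 0 \<le> l j})"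
proof (rule inj_onI)
  fix l l'
  assume l: "l \<in> Lat v \<inter> {l. \<forall>j. j \<notin> I \<longrightarrow> 0 \<le> l j}" and l': "l' \<in> Lat v \<inter> {l. \<forall>j. j \<notin> I \<longrightarrow> 0 \<le> l j}"
    and eq: "(\<lambda>j. if j \<in> I then 0 else nat (l j)) = (\<lambda>j. if j \<in> I then 0 else nat (l' j))"
  define c where "c j = real_of_int (l j - l' j)" for j
  have "c j = 0" if "j \<notin> I" for j
    using fun_cong[OF eq, of j] l l' that by (auto simp: c_def eq_nat_nat_iff)
  moreover have "(\<Sum>j\<in>UNIV. c j * real_of_int (v j i)) = 0" for i
  proof -
    have "(\<Sum>j\<in>UNIV. c j * real_of_int (v j i)) = real_of_int ((\<Sum>j\<in>UNIV. l j * v j i) - (\<Sum>j\<in>UNIV. l' j * v j i))"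
      by (simp add: c_def algebra_simps sum_subtractf)
    also have "\<dots> = 0"
      using l l' by (simp add: Lat_def)
    finally show ?thesis .
  qed
  ultimately have "\<forall>j. c j = 0"
    using assms unfolding lin_indep_on_def by blast
  then show "l = l'"
    by (simp add: c_def fun_eq_iff)
qed

lemma summable_on_exp_neg_sum_outside:
  fixes v :: "'n::finite \<Rightarrow> 'd::finite \<Rightarrow> int"
  assumes "lin_indep_on v I"
  shows "(\<lambda>l. exp (- (\<Sum>j\<in>-I. real_of_int (l j)))) summable_on (Lat v \<inter> {l. \<forall>j. j \<notin> I \<longrightarrow> 0 \<le> l j})"
proof -
  define L where "L = Lat v \<inter> {l. \<forall>j. j \<notin> I \<longrightarrow> 0 \<le> l j}"
  define p where "p l = (\<lambda>j. if j \<in> I then 0 else nat (l j))" for l :: "'n \<Rightarrow> int"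
  have sum_p: "(\<Sum>j\<in>UNIV. real (p l j)) = (\<Sum>j\<in>-I. real_of_int (l j))" if "l \<in> L" for l
  proof -
    have "(\<Sum>j\<in>UNIV. real (p l j)) = (\<Sum>j\<in>UNIV. if j \<in> I then 0 else real_of_int (l j))"
      using that by (intro sum.cong) (auto simp: p_def L_def)
    also have "\<dots> = (\<Sum>j\<in>-I. real_of_int (l j))"
      by (rule sum.mono_neutral_cong_right) auto
    finally show ?thesis .
  qed
  have "(\<lambda>x. exp (- real (\<Sum>j\<in>UNIV. x j))) summable_on p ` L"
    by (rule summable_on_subset_banach[OF summable_on_exp_neg_sum]) simp
  then have "((\<lambda>x. exp (- real (\<Sum>j\<in>UNIV. x j))) \<circ> p) summable_on L"
    using summable_on_reindex[OF inj_on_Lat_outside[OF assms, folded p_def L_def]] by blast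
  then show ?thesis
    unfolding L_def[symmetric] by (rule summable_on_cong[THEN iffD1, rotated]) (simp add: sum_p)
qed

section \<open>Local majorants of the series\<close>

lemma sum_mult_ln_norm_le:
  fixes z0 :: "'n::finite \<Rightarrow> complex"
  assumes u: "u \<in> dual_cone (Ccone v I)"
    and z0: "\<And>j. - ln (norm (z0 j)) = u j + (if j \<in> I then 0 else K)"
    and l: "(\<lambda>j. real_of_int (l j)) \<in> Ccone v I"
  shows "(\<Sum>j\<in>UNIV. real_of_int (l j) * ln (norm (z0 j))) \<le> - K * (\<Sum>j\<in>-I. real_of_int (l j))"
proof -
  \<comment> \<open>the pairing with \<open>u\<close> is nonnegative, and the shift \<open>K\<close> outside \<open>I\<close> contributes the right-hand side\<close>
  have ln_z0: "ln (norm (z0 j)) = - (u j + (if j \<in> I then 0 else K))" for j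
    using z0[of j] by linarith
  have "real_of_int (l j) * ln (norm (z0 j))
      = - (u j * real_of_int (l j)) - (if j \<in> I then 0 else K) * real_of_int (l j)" for j
    unfolding ln_z0 by (simp add: algebra_simps)
  then have "(\<Sum>j\<in>UNIV. real_of_int (l j) * ln (norm (z0 j)))
      = - (\<Sum>j\<in>UNIV. u j * real_of_int (l j)) - (\<Sum>j\<in>UNIV. (if j \<in> I then 0 else K) * real_of_int (l j))"
    by (simp add: sum_subtractf sum_negf)
  also have "(\<Sum>j\<in>UNIV. (if j \<in> I then 0 else K) * real_of_int (l j)) = (\<Sum>j\<in>-I. K * real_of_int (l j))"
    by (rule sum.mono_neutral_cong_right) auto
  also have "\<dots> = K * (\<Sum>j\<in>-I. real_of_int (l j))"
    by (simp add: sum_distrib_left)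
  finally show ?thesis
    using u l unfolding dual_cone_def by auto
qed

lemma prod_factor_majorants_le_exp:
  fixes v :: "'n::finite \<Rightarrow> 'd::finite \<Rightarrow> int" and z0 :: "'n \<Rightarrow> complex" and C u :: "'n \<Rightarrow> real"
  assumes "has_height_one v"
    and M: "\<And>l. l \<in> Lat v \<Longrightarrow> (\<Sum>j\<in>UNIV. \<bar>real_of_int (l j)\<bar>) \<le> M * (\<Sum>j\<in>-I. \<bar>real_of_int (l j)\<bar>)"
    and K: "M * (1 + (real CARD('n) + 1) * ln 2) + 1 \<le> K"
    and u: "u \<in> dual_cone (Ccone v I)"
    and z0: "\<And>j. - ln (norm (z0 j)) = u j + (if j \<in> I then 0 else K)"
    and C: "\<And>j. 0 < C j"
    and l: "l \<in> Lat v" "(\<lambda>j. real_of_int (l j)) \<in> Ccone v I"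
  shows "(\<Prod>j\<in>UNIV. C j * exp (real_of_int (l j) * ln (norm (z0 j)) + \<bar>l j\<bar>) * 2 ^ nat \<bar>l j\<bar> * fact_ratio (l j))
         \<le> (\<Prod>j\<in>UNIV. C j) * exp (- (\<Sum>j\<in>-I. real_of_int (l j)))"
proof -
  define T where "T = (\<Sum>j\<in>-I. real_of_int (l j))"
  define P where "P = (\<Sum>j\<in>UNIV. nat \<bar>l j\<bar>)"
  have outside_nonneg: "0 \<le> l j" if "j \<notin> I" for j
    using l Ccone_of_Lat_iff that by blast
  then have "(\<Sum>j\<in>-I. \<bar>real_of_int (l j)\<bar>) = T"
    unfolding T_def by (intro sum.cong) auto
  then have P_le: "real P \<le> M * T"
    using M[OF l(1)] by (simp add: P_def)
  have "0 \<le> T"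
    unfolding T_def using outside_nonneg by (intro sum_nonneg) auto
  have exponent: "(\<Sum>j\<in>UNIV. real_of_int (l j) * ln (norm (z0 j))) \<le> - K * T"
    unfolding T_def using u z0 l(2) by (rule sum_mult_ln_norm_le)
  have "(\<Prod>j\<in>UNIV. C j * exp (real_of_int (l j) * ln (norm (z0 j)) + \<bar>l j\<bar>) * 2 ^ nat \<bar>l j\<bar> * fact_ratio (l j))
      = (\<Prod>j\<in>UNIV. C j) * exp ((\<Sum>j\<in>UNIV. real_of_int (l j) * ln (norm (z0 j))) + real P) * 2 ^ P
          * (\<Prod>j\<in>UNIV. fact_ratio (l j))"
    by (simp add: prod.distrib exp_add exp_sum power_sum P_def)
  also have "\<dots> \<le> (\<Prod>j\<in>UNIV. C j) * exp (- K * T + real P) * 2 ^ P * 2 ^ (CARD('n) * P)"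
    using prod_fact_ratio_le[OF sum_Lat_eq_0[OF assms(1) l(1)]] exponent C fact_ratio_pos
    by (intro mult_mono prod_nonneg mult_nonneg_nonneg) (auto simp: P_def less_imp_le)
  also have "\<dots> = (\<Prod>j\<in>UNIV. C j) * (exp (- K * T + real P) * exp (real P * ln 2) * exp (real (CARD('n) * P) * ln 2))"
    using exp_ln[of "2::real"] by (simp only: exp_of_nat_mult mult.assoc)
  also have "\<dots> = (\<Prod>j\<in>UNIV. C j) * exp (- K * T + real P * (1 + (real CARD('n) + 1) * ln 2))"
    by (simp add: algebra_simps flip: exp_add)
  also have "\<dots> \<le> (\<Prod>j\<in>UNIV. C j) * exp (- T)"
  proof -
    have "real P * (1 + (real CARD('n) + 1) * ln 2) \<le> M * T * (1 + (real CARD('n) + 1) * ln 2)"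
      using P_le by (rule mult_right_mono) auto
    also have "\<dots> = M * (1 + (real CARD('n) + 1) * ln 2) * T"
      by (simp add: mult_ac)
    also have "\<dots> \<le> (K - 1) * T"
      using K \<open>0 \<le> T\<close> by (intro mult_right_mono) auto
    finally show ?thesis
      using C by (intro mult_left_mono prod_nonneg) (auto simp: algebra_simps less_imp_le)
  qed
  finally show ?thesis
    by (simp add: T_def)
qed

definition has_local_majorants ::
    "('l \<Rightarrow> 'n::finite bivariate) \<Rightarrow> 'l set \<Rightarrow> ('n \<Rightarrow> complex) \<Rightarrow> ('n \<Rightarrow> complex) \<Rightarrow> bool" where
  "has_local_majorants f L z0 lam0 \<longleftrightarrow> (\<exists>r>0. \<exists>B. B summable_on L \<and>
      (\<forall>l\<in>L. has_series_majorant r (\<lambda>w u. f l (\<lambda>j. z0 j + w j) (\<lambda>j. lam0 j + u j)) (B l)))"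

lemma summable_on_norm_if_local_majorants:
  assumes "has_local_majorants f L z0 lam0"
  shows "(\<lambda>l. norm (f l z0 lam0)) summable_on L"
proof -
  obtain r B where r: "0 < r" and B: "B summable_on L"
    and maj: "\<And>l. l \<in> L \<Longrightarrow> has_series_majorant r (\<lambda>w u. f l (\<lambda>j. z0 j + w j) (\<lambda>j. lam0 j + u j)) (B l)"
    using assms unfolding has_local_majorants_def by blast
  have "norm (f l z0 lam0) \<le> B l" if "l \<in> L" for l
    using norm_le_has_series_majorant[OF maj[OF that], of "\<lambda>_. 0" "\<lambda>_. 0"] r
    by (simp add: in_polydisc_def)
  then show ?thesis
    by (intro summable_on_comparison_test[OF B]) auto
qed

lemma analytic2_on_infsum:
  fixes f :: "'l::countable \<Rightarrow> 'n::finite bivariate"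
  assumes "\<And>z0 lam0. (z0, lam0) \<in> S \<Longrightarrow> has_local_majorants f L z0 lam0"
  shows "analytic2_on S (\<lambda>z lam. \<Sum>\<^sub>\<infinity>l\<in>L. f l z lam)"
  unfolding analytic2_on_def
proof (intro ballI, clarify)
  fix z0 lam0
  assume "(z0, lam0) \<in> S"
  then obtain r B where r: "0 < r" and B: "B summable_on L"
    and maj: "\<And>l. l \<in> L \<Longrightarrow> has_series_majorant r (\<lambda>w u. f l (\<lambda>j. z0 j + w j) (\<lambda>j. lam0 j + u j)) (B l)"
    using assms unfolding has_local_majorants_def by blast
  have sum: "has_series_majorant r (\<lambda>w u. \<Sum>\<^sub>\<infinity>l\<in>L. f l (\<lambda>j. z0 j + w j) (\<lambda>j. lam0 j + u j)) (\<Sum>\<^sub>\<infinity>l\<in>L. B l)"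
    using r B maj by (intro has_series_majorant_infsum) auto
  obtain a where a: "\<And>w u. in_polydisc r w u \<Longrightarrow>
      ((\<lambda>(\<alpha>, \<beta>). a \<alpha> \<beta> * (\<Prod>j\<in>UNIV. w j ^ \<alpha> j) * (\<Prod>j\<in>UNIV. u j ^ \<beta> j))
        has_sum (\<Sum>\<^sub>\<infinity>l\<in>L. f l (\<lambda>j. z0 j + w j) (\<lambda>j. lam0 j + u j))) UNIV"
    by (rule has_series_majorant_power_series[OF sum r]) blast
  show "\<exists>r>0. \<exists>a. \<forall>z lam. (\<forall>j. cmod (z j - z0 j) < r \<and> cmod (lam j - lam0 j) < r) \<longrightarrow>
      ((\<lambda>(\<alpha>, \<beta>). a \<alpha> \<beta> * (\<Prod>j\<in>UNIV. (z j - z0 j) ^ \<alpha> j) * (\<Prod>j\<in>UNIV. (lam j - lam0 j) ^ \<beta> j))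
        has_sum (\<Sum>\<^sub>\<infinity>l\<in>L. f l z lam)) UNIV"
    using r a[of "\<lambda>j. z j - z0 j" "\<lambda>j. lam j - lam0 j" for z lam] by (auto simp: in_polydisc_def)
qed

lemma has_series_majorant_series_factors:
  fixes z0 lam0 :: "'n::finite \<Rightarrow> complex"
  assumes "\<And>j. z0 j \<noteq> 0" "\<And>j. Arg (z0 j) < pi"
  obtains r C where "0 < r" "\<And>j. 0 < C j"
    "\<And>j m. has_series_majorant r
      (\<lambda>(w::'n \<Rightarrow> complex) u. zpow (z0 j + w j) (of_int m + (lam0 j + u j)) / Gamma (of_int m + (lam0 j + u j) + 1))
      (C j * exp (real_of_int m * ln (norm (z0 j)) + \<bar>m\<bar>) * 2 ^ nat \<bar>m\<bar> * fact_ratio m)"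
proof -
  define factor where "factor j m = (\<lambda>(w::'n \<Rightarrow> complex) u.
      zpow (z0 j + w j) (of_int m + (lam0 j + u j)) / Gamma (of_int m + (lam0 j + u j) + 1))" for j and m :: int
  define bound where "bound C j m = C * exp (real_of_int m * ln (norm (z0 j)) + \<bar>m\<bar>) * 2 ^ nat \<bar>m\<bar> * fact_ratio m"
    for C j and m :: int
  have "\<forall>j. \<exists>R C. 0 < R \<and> 0 < C \<and> (\<forall>r m. 0 < r \<longrightarrow> 2 * r < R \<longrightarrow> has_series_majorant r (factor j m) (bound C j m))"
  proof
    fix j
    obtain R C where "0 < R" "0 < C"
      "\<And>r m. 0 < r \<Longrightarrow> 2 * r < R \<Longrightarrow> has_series_majorant r (factor j m) (bound C j m)"
      unfolding factor_def bound_def using assms by (rule has_series_majorant_series_factor) blast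
    then show "\<exists>R C. 0 < R \<and> 0 < C \<and> (\<forall>r m. 0 < r \<longrightarrow> 2 * r < R \<longrightarrow> has_series_majorant r (factor j m) (bound C j m))"
      by blast
  qed
  then obtain R C where R: "\<And>j. 0 < R j" and C: "\<And>j. 0 < C j"
    and factor: "\<And>j r m. 0 < r \<Longrightarrow> 2 * r < R j \<Longrightarrow> has_series_majorant r (factor j m) (bound (C j) j m)"
    unfolding choice_iff by blast
  define r where "r = Min (range R) / 3"
  have Min_pos: "0 < Min (range R)"
    using R by (subst Min_gr_iff) auto
  have "2 * r < R j" for j
  proof -
    have "Min (range R) \<le> R j"
      by (rule Min_le) auto
    then show ?thesis
      using Min_pos unfolding r_def by linarith
  qed
  moreover have "0 < r"
    using Min_pos by (simp add: r_def)
  ultimately have majorant: "has_series_majorant r (factor j m) (bound (C j) j m)" for j m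
    by (rule factor[rotated])
  show ?thesis
    by (rule that[OF \<open>0 < r\<close> C majorant[unfolded factor_def bound_def]])
qed

lemma series_term_has_local_majorants:
  fixes v :: "'n::finite \<Rightarrow> 'd::finite \<Rightarrow> int"
  assumes "has_height_one v" "lin_indep_on v I"
    and M: "\<And>l. l \<in> Lat v \<Longrightarrow> (\<Sum>j\<in>UNIV. \<bar>real_of_int (l j)\<bar>) \<le> M * (\<Sum>j\<in>-I. \<bar>real_of_int (l j)\<bar>)"
    and K: "M * (1 + (real CARD('n) + 1) * ln 2) + 1 \<le> K"
    and z0: "z0 \<in> Uset v I (\<lambda>j. if j \<in> I then 0 else K)"
  shows "has_local_majorants (\<lambda>l z lam. series_term z lam l) (Lat v \<inter> {l. (\<lambda>j. real_of_int (l j)) \<in> Ccone v I}) z0 lam0"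
proof -
  define L where "L = Lat v \<inter> {l. (\<lambda>j. real_of_int (l j)) \<in> Ccone v I}"
  obtain u where u: "u \<in> dual_cone (Ccone v I)" and ln_z0: "\<And>j. - ln (norm (z0 j)) = u j + (if j \<in> I then 0 else K)"
    using z0 unfolding Uset_def by (auto simp: fun_eq_iff)
  have nonzero: "z0 j \<noteq> 0" and Arg: "Arg (z0 j) < pi" for j
    using z0 by (auto simp: Uset_def)
  obtain r C where r: "0 < r" and C: "\<And>j. 0 < C j"
    and factor: "\<And>j m. has_series_majorant r
      (\<lambda>(w::'n \<Rightarrow> complex) u. zpow (z0 j + w j) (of_int m + (lam0 j + u j)) / Gamma (of_int m + (lam0 j + u j) + 1))
      (C j * exp (real_of_int m * ln (norm (z0 j)) + \<bar>m\<bar>) * 2 ^ nat \<bar>m\<bar> * fact_ratio m)"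
    by (rule has_series_majorant_series_factors[of z0 lam0, OF nonzero Arg]) blast
  define B where "B l = (\<Prod>j\<in>UNIV. C j * exp (real_of_int (l j) * ln (norm (z0 j)) + \<bar>l j\<bar>)
      * 2 ^ nat \<bar>l j\<bar> * fact_ratio (l j))" for l :: "'n \<Rightarrow> int"
  have "has_series_majorant r (\<lambda>w u. series_term (\<lambda>j. z0 j + w j) (\<lambda>j. lam0 j + u j) l) (B l)" for l
    unfolding B_def series_term_def using factor r by (intro has_series_majorant_prod) auto
  moreover have "B summable_on L"
  proof (rule summable_on_comparison_test)
    have "L = Lat v \<inter> {l. \<forall>j. j \<notin> I \<longrightarrow> 0 \<le> l j}"
      unfolding L_def using Ccone_of_Lat_iff by blast
    then show "(\<lambda>l. (\<Prod>j\<in>UNIV. C j) * exp (- (\<Sum>j\<in>-I. real_of_int (l j)))) summable_on L"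
      using summable_on_exp_neg_sum_outside[OF assms(2)] by (simp add: summable_on_cmult_right)
    show "B l \<le> (\<Prod>j\<in>UNIV. C j) * exp (- (\<Sum>j\<in>-I. real_of_int (l j)))" if "l \<in> L" for l
      unfolding B_def using that
      by (intro prod_factor_majorants_le_exp[OF assms(1) M K u ln_z0 C]) (auto simp: L_def)
    show "0 \<le> B l" for l
      unfolding B_def using C by (intro prod_nonneg mult_nonneg_nonneg) (auto intro: less_imp_le fact_ratio_pos)
  qed
  ultimately show ?thesis
    unfolding has_local_majorants_def L_def[symmetric] using r by blast
qed

theorem proposition2p8:
  fixes v :: "'n::finite \<Rightarrow> 'd::finite \<Rightarrow> int"
    and \<omega> :: "'n \<Rightarrow> real"
    and I :: "'n set"
  assumes "inj v"
    and "generates_lattice v"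
    and "has_height_one v"
    and "regular_triangulation v \<omega>"
    and "maximal_cell v \<omega> I"
  shows "\<exists>c \<in> dual_cone (Ccone v I).
           (\<forall>z \<in> Uset v I c. \<forall>lam. ((\<lambda>l. norm (series_term z lam l)) summable_on (Lat v \<inter> {l. (\<lambda>j. real_of_int (l j)) \<in> Ccone v I}))) \<and>
           analytic2_on (Uset v I c \<times> UNIV)
             (\<lambda>z lam. \<Sum>\<^sub>\<infinity>l \<in> Lat v \<inter> {l. (\<lambda>j. real_of_int (l j)) \<in> Ccone v I}. series_term z lam l)"
proof -
  have indep: "lin_indep_on v I"
    using assms(4,5) unfolding regular_triangulation_def maximal_cell_def by blast
  obtain M where "0 \<le> M"
    and M: "\<And>l. l \<in> Lat v \<Longrightarrow> (\<Sum>j\<in>UNIV. \<bar>real_of_int (l j)\<bar>) \<le> M * (\<Sum>j\<in>-I. \<bar>real_of_int (l j)\<bar>)"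
    using Lat_l1_norm_le_outside[OF indep] by blast
  define K where "K = M * (1 + (real CARD('n) + 1) * ln 2) + 1"
  define c where "c j = (if j \<in> I then 0 else K)" for j
  have "c \<in> dual_cone (Ccone v I)"
    using \<open>0 \<le> M\<close> by (auto simp: K_def c_def dual_cone_def Ccone_def intro!: sum_nonneg)
  moreover have local: "has_local_majorants (\<lambda>l z lam. series_term z lam l)
      (Lat v \<inter> {l. (\<lambda>j. real_of_int (l j)) \<in> Ccone v I}) z lam" if "z \<in> Uset v I c" for z lam
    using that unfolding c_def[abs_def]
    by (intro series_term_has_local_majorants[OF assms(3) indep M]) (simp_all add: K_def)
  moreover have "analytic2_on (Uset v I c \<times> UNIV)
      (\<lambda>z lam. \<Sum>\<^sub>\<infinity>l \<in> Lat v \<inter> {l. (\<lambda>j. real_of_int (l j)) \<in> Ccone v I}. series_term z lam l)"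
    by (rule analytic2_on_infsum) (auto intro: local)
  ultimately show ?thesis
    using summable_on_norm_if_local_majorants[OF local] by blast
qed

end
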